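(* Let $n\ge1$, $p\ge4$, $\mathbb{T}^n=\mathbb{R}^n/\mathbb{Z}^n$, and $b\in C^\infty(\mathbb{T}^n\times[0,\infty);\mathbb{R}^n)$ with $\|b\|_{C^k}<\infty$ for all $k$. Let $W_t$ be a standard $n$-dimensional Brownian motion; for $\varepsilon>0$ let $(X^\varepsilon_t,V^\varepsilon_t)$ solve $dX^\varepsilon_t=V^\varepsilon_tdt$, $dV^\varepsilon_t=\frac1\varepsilon(b(X^\varepsilon_t,t)-V^\varepsilon_t)dt+\sqrt{2/\varepsilon}\,dW_t$, with $X^\varepsilon_0=x$ deterministic and $\tilde V^\varepsilon_0:=V^\varepsilon_0-b(x,0)$ satisfying $\mathbf{E}\tilde V^\varepsilon_0=0$, $\mathbf{E}|\tilde V^\varepsilon_0|^p<\infty$. Writing $b_s=b(X^\varepsilon_s,s)$ (and similarly for derivatives), define $$\hat R_t=\varepsilon e^{-t/\varepsilon}\big(\partial_tb(x,0)+D_xb(x,0)V^\varepsilon_0\big),$$ $$U_t=\varepsilon\int_0^te^{-(t-s)/\varepsilon}\big(\partial_t^2b_s+2\,\partial_tD_xb_s\,V^\varepsilon_s+(D_x^2b_s\,V^\varepsilon_s)V^\varepsilon_s\big)\,ds .$$ Then there exists a constant $C>0$, depending only on $b$ (and on $\mathbf{E}|\tilde V^\varepsilon_0|^p$), such that for all $t\ge0$ $$\mathbf{E}|\hat R_t|\le C\varepsilon e^{-t/\varepsilon}\qquad\text{and}\qquad\mathbf{E}|U_t|\le C\varepsilon^2 .$$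
   Context: For $f$ on $S=\mathbb{T}^n\times[0,\infty)$, $\|f\|_{C^k}=\max_{|\alpha|\le k}\sup_{z\in S}|D^\alpha f(z)|$. $D_xb$ is the Jacobian of $b$ in $x$, $\partial_tD_xb$ its time derivative, and $(D_x^2b\,v)v$ denotes the vector with components $\sum_{k,l}\partial_{x_k}\partial_{x_l}b^i\,v^kv^l$. $b$ is viewed as $\mathbb{Z}^n$-periodic in $x$ on $\mathbb{R}^n$. $V^\varepsilon_0$ is measurable with respect to the initial sigma-algebra of the filtration of $W$. *)

theory Defs
  imports "HOL-Probability.Probability"
begin

fun iter_dd :: "'z::real_normed_vector list \<Rightarrow> ('z \<Rightarrow> 'b::real_normed_vector) \<Rightarrow> 'z \<Rightarrow> 'b" where
  "iter_dd [] f = f"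
| "iter_dd (u # us) f = (\<lambda>z. frechet_derivative (iter_dd us f) (at z) u)"

text \<open>b is smooth and all partial derivatives of all orders are bounded on
  S = R^n x [0,oo) (b given on R^n x R, i.e. a smooth extension across t = 0).\<close>
definition smooth_bounded_derivs :: "((real^'n) \<times> real \<Rightarrow> real^'n) \<Rightarrow> bool" where
  "smooth_bounded_derivs b \<longleftrightarrow>
     (\<forall>us \<in> lists Basis.
        (\<forall>z. iter_dd us b differentiable (at z)) \<and>
        bounded ((iter_dd us b) ` {z. snd z \<ge> 0}))"

text \<open>b is Z^n-periodic in x, i.e. a function on the torus.\<close>
definition periodic_in_x :: "((real^'n) \<times> real \<Rightarrow> real^'n) \<Rightarrow> bool" where
  "periodic_in_x b \<longleftrightarrow>
     (\<forall>x t k. (\<forall>i. k $ i \<in> \<int>) \<longrightarrow> b (x + k, t) = b (x, t))"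

definition std_brownian_motion :: "'a measure \<Rightarrow> (real \<Rightarrow> 'a \<Rightarrow> real^'n) \<Rightarrow> bool" where
  "std_brownian_motion M W \<longleftrightarrow>
     prob_space M \<and>
     (\<forall>t. W t \<in> borel_measurable M) \<and>
     (\<forall>\<omega>\<in>space M. W 0 \<omega> = 0 \<and> continuous_on {0..} (\<lambda>t. W t \<omega>)) \<and>
     (\<forall>ts :: real list. sorted_wrt (<) ts \<and> (\<forall>t\<in>set ts. 0 \<le> t) \<longrightarrow>
        prob_space.indep_vars M (\<lambda>_. borel)
          (\<lambda>(j, i) \<omega>. (W (ts ! Suc j) \<omega> - W (ts ! j) \<omega>) $ i)
          ({..<length ts - 1} \<times> UNIV) \<and>
        (\<forall>j < length ts - 1. \<forall>i.
           distributed M lborel (\<lambda>\<omega>. (W (ts ! Suc j) \<omega> - W (ts ! j) \<omega>) $ i)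
             (\<lambda>y. ennreal (normal_density 0 (sqrt (ts ! Suc j - ts ! j)) y))))"

end

(*
  Variation of constants turns the velocity equation into
    V_t = e^(-t/eps) V_0 + (1/eps) int_0^t e^(-(t-s)/eps) b_s ds + sqrt (2/eps) N_t,
  and integrating the stochastic convolution N_t = int_0^t e^(-(t-s)/eps) dW_s by parts gives
    N_t = e^(-t/eps) W_t + (1/eps) int_0^t e^(-(t-s)/eps) (W_t - W_s) ds,
  which involves only Brownian increments.  Since (1/eps) e^(-(t-s)/eps) ds has mass at most one
  on [0, t], Jensen's inequality and E|W_t - W_s|^2 = n (t - s) bound E|V_t|^2 uniformly in t
  and eps.  As b has bounded derivatives, the integrand of U grows at most like 1 + |V_s|^2 and
  R-hat at most like 1 + |V_0|, whence E|U_t| <= C eps int_0^t e^(-(t-s)/eps) ds <= C eps^2 and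
  E|R-hat_t| <= C eps e^(-t/eps).
*)

theory Submission
  imports Defs
begin

lemma powr_le_one_add_powr:
  fixes r p q :: real
  assumes "0 \<le> r" "0 \<le> q" "q \<le> p"
  shows "r powr q \<le> 1 + r powr p"
proof (cases "r \<le> 1")
  case True
  then have "r powr q \<le> 1 powr q"
    using assms by (intro powr_mono2) auto
  then show ?thesis by (simp add: add_increasing2)
next
  case False
  then have "r powr q \<le> r powr p"
    using assms by (intro powr_mono) auto
  then show ?thesis by simp
qed

lemma mult_exp_minus_le_one:
  fixes x :: real
  shows "x * exp (- x) \<le> 1"
proof -
  have "x \<le> exp x" using exp_ge_add_one_self[of x] by linarith
  then show ?thesis by (simp add: exp_minus field_simps)
qed

lemma norm_add_squared_le:
  fixes a b :: "'a::real_normed_vector"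
  shows "(norm (a + b))\<^sup>2 \<le> 2 * ((norm a)\<^sup>2 + (norm b)\<^sup>2)"
proof -
  have "(norm (a + b))\<^sup>2 \<le> (norm a + norm b)\<^sup>2"
    by (simp add: norm_triangle_ineq power_mono)
  also have "\<dots> \<le> 2 * ((norm a)\<^sup>2 + (norm b)\<^sup>2)"
    using zero_le_power2[of "norm a - norm b"] by (simp add: power2_eq_square algebra_simps)
  finally show ?thesis .
qed

lemma norm_add3_squared_le:
  fixes a b c :: "'a::real_normed_vector"
  shows "(norm (a + b + c))\<^sup>2 \<le> 3 * ((norm a)\<^sup>2 + (norm b)\<^sup>2 + (norm c)\<^sup>2)"
proof -
  have "norm (a + b + c) \<le> norm a + norm b + norm c"
    using norm_triangle_ineq[of "a + b" c] norm_triangle_ineq[of a b] by linarith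
  then have "(norm (a + b + c))\<^sup>2 \<le> (norm a + norm b + norm c)\<^sup>2"
    by (simp add: power_mono)
  also have "\<dots> \<le> 3 * ((norm a)\<^sup>2 + (norm b)\<^sup>2 + (norm c)\<^sup>2)"
    using sum_squares_ge_zero[of "norm a - norm b" "norm b - norm c"]
      zero_le_power2[of "norm a - norm c"]
    by (simp add: power2_eq_square algebra_simps)
  finally show ?thesis .
qed

lemma squared_one_add_mult_le:
  fixes d x :: real
  assumes "0 \<le> d"
  shows "(1 + d * x)\<^sup>2 \<le> (1 + d)\<^sup>2 * (1 + x\<^sup>2)"
proof -
  have "(1 + d * x)\<^sup>2 \<le> (1 + d\<^sup>2) * (1 + x\<^sup>2)"
    using zero_le_power2[of "x - d"] by (simp add: power2_eq_square algebra_simps)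
  also have "\<dots> \<le> (1 + d)\<^sup>2 * (1 + x\<^sup>2)"
    using assms by (intro mult_right_mono) (simp_all add: power2_eq_square algebra_simps)
  finally show ?thesis .
qed

lemma norm_sum_Basis_scaleR_le:
  fixes u :: "'a::euclidean_space" and y :: "'a \<Rightarrow> 'b::real_normed_vector"
  assumes "\<And>e. e \<in> Basis \<Longrightarrow> norm (y e) \<le> B"
  shows "norm (\<Sum>e\<in>Basis. (u \<bullet> e) *\<^sub>R y e) \<le> DIM('a) * norm u * B"
proof -
  have "norm (\<Sum>e\<in>Basis. (u \<bullet> e) *\<^sub>R y e) \<le> (\<Sum>e\<in>Basis. \<bar>u \<bullet> e\<bar> * norm (y e))"
    by (rule order_trans[OF norm_sum]) simp
  also have "\<dots> \<le> (\<Sum>e\<in>(Basis::'a set). norm u * B)"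
    by (intro sum_mono mult_mono Basis_le_norm assms) auto
  finally show ?thesis by simp
qed

section \<open>Directional derivatives of the drift\<close>

lemma frechet_derivative_Basis_expansion:
  fixes f :: "'a::euclidean_space \<Rightarrow> 'b::real_normed_vector"
  assumes "f differentiable (at z)"
  shows "frechet_derivative f (at z) v = (\<Sum>e\<in>Basis. (v \<bullet> e) *\<^sub>R frechet_derivative f (at z) e)"
proof -
  have lin: "linear (frechet_derivative f (at z))"
    by (rule linear_frechet_derivative[OF assms])
  have "frechet_derivative f (at z) v = frechet_derivative f (at z) (\<Sum>e\<in>Basis. (v \<bullet> e) *\<^sub>R e)"
    by (simp only: euclidean_representation)
  also have "\<dots> = (\<Sum>e\<in>Basis. (v \<bullet> e) *\<^sub>R frechet_derivative f (at z) e)"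
    by (simp only: linear_sum[OF lin] linear_scale[OF lin])
  finally show ?thesis .
qed

lemma frechet_derivative_sum_scaleR:
  fixes g :: "'i \<Rightarrow> 'a::real_normed_vector \<Rightarrow> 'b::real_normed_vector"
  assumes "finite I" "\<And>i. i \<in> I \<Longrightarrow> g i differentiable (at z)"
  shows "frechet_derivative (\<lambda>z. \<Sum>i\<in>I. c i *\<^sub>R g i z) (at z) w
    = (\<Sum>i\<in>I. c i *\<^sub>R frechet_derivative (g i) (at z) w)"
proof -
  have "((\<lambda>z. \<Sum>i\<in>I. c i *\<^sub>R g i z) has_derivative
      (\<lambda>w. \<Sum>i\<in>I. c i *\<^sub>R frechet_derivative (g i) (at z) w)) (at z)"
    using assms by (intro has_derivative_sum has_derivative_scaleR_right)
      (auto simp: frechet_derivative_works)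
  then show ?thesis by (simp add: frechet_derivative_at[symmetric])
qed

lemma iter_dd_Cons_Basis_expansion:
  fixes f :: "'a::euclidean_space \<Rightarrow> 'b::real_normed_vector"
  assumes "iter_dd us f differentiable (at z)"
  shows "iter_dd (u # us) f z = (\<Sum>e\<in>Basis. (u \<bullet> e) *\<^sub>R iter_dd (e # us) f z)"
  unfolding iter_dd.simps by (rule frechet_derivative_Basis_expansion[OF assms])

lemma iter_dd_inner_Basis_expansion:
  fixes f :: "'a::euclidean_space \<Rightarrow> 'b::real_normed_vector"
  assumes "\<And>z. f differentiable (at z)"
    and "\<And>e. e \<in> Basis \<Longrightarrow> iter_dd [e] f differentiable (at z)"
  shows "iter_dd [u, v] f z = (\<Sum>e\<in>Basis. (v \<bullet> e) *\<^sub>R iter_dd [u, e] f z)"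
proof -
  have expand: "iter_dd [v] f = (\<lambda>z. \<Sum>e\<in>Basis. (v \<bullet> e) *\<^sub>R iter_dd [e] f z)"
  proof
    fix x
    show "iter_dd [v] f x = (\<Sum>e\<in>Basis. (v \<bullet> e) *\<^sub>R iter_dd [e] f x)"
      by (rule iter_dd_Cons_Basis_expansion) (simp add: assms(1))
  qed
  have "iter_dd [u, v] f z = frechet_derivative (iter_dd [v] f) (at z) u"
    by (simp only: iter_dd.simps)
  also have "\<dots> = frechet_derivative (\<lambda>z. \<Sum>e\<in>Basis. (v \<bullet> e) *\<^sub>R iter_dd [e] f z) (at z) u"
    by (simp only: expand)
  also have "\<dots> = (\<Sum>e\<in>Basis. (v \<bullet> e) *\<^sub>R frechet_derivative (iter_dd [e] f) (at z) u)"
    using assms(2) by (intro frechet_derivative_sum_scaleR) auto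
  also have "\<dots> = (\<Sum>e\<in>Basis. (v \<bullet> e) *\<^sub>R iter_dd [u, e] f z)"
    by (simp only: iter_dd.simps)
  finally show ?thesis .
qed

text \<open>Unfolding iterated derivatives would undo the coordinate expansions below, so from here on
  they stay folded.\<close>

declare iter_dd.simps(2) [simp del]

text \<open>\<open>(\<partial>\<^sub>t + v \<cdot> \<nabla>\<^sub>x)\<^sup>2 b\<close> at \<open>z = (x, t)\<close>, the integrand of \<open>U\<close>; \<open>(0, 1)\<close> is the time
  direction and \<open>(v, 0)\<close> a space direction.\<close>

definition transport_second_derivative ::
    "((real^'n) \<times> real \<Rightarrow> real^'n) \<Rightarrow> (real^'n) \<times> real \<Rightarrow> real^'n \<Rightarrow> real^'n" where
  "transport_second_derivative b z v =
     iter_dd [(0, 1), (0, 1)] b z + 2 *\<^sub>R iter_dd [(0, 1), (v, 0)] b z + iter_dd [(v, 0), (v, 0)] b z"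

lemma time_direction_Basis: "((0::real^'n), 1::real) \<in> Basis"
  by (simp add: Basis_prod_def)

context
  fixes b :: "(real^'n) \<times> real \<Rightarrow> real^'n"
  assumes b_smooth: "smooth_bounded_derivs b"
begin

lemma iter_dd_differentiable:
  assumes "set us \<subseteq> Basis"
  shows "iter_dd us b differentiable (at z)"
proof -
  have "us \<in> lists Basis" using assms by auto
  then show ?thesis using b_smooth unfolding smooth_bounded_derivs_def by blast
qed

lemma iter_dd_continuous_on_compose [continuous_intros]:
  "set us \<subseteq> Basis \<Longrightarrow> continuous_on S g \<Longrightarrow> continuous_on S (\<lambda>s. iter_dd us b (g s))"
  by (rule continuous_on_compose2[of UNIV, OF continuous_at_imp_continuous_on])
    (auto intro: differentiable_imp_continuous_within iter_dd_differentiable)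

lemma iter_dd_bounded_upto_two:
  obtains B where "0 \<le> B"
    and "\<And>us z. set us \<subseteq> Basis \<Longrightarrow> length us \<le> 2 \<Longrightarrow> 0 \<le> snd z
      \<Longrightarrow> norm (iter_dd us b z) \<le> B"
proof -
  let ?L = "{us. set us \<subseteq> (Basis :: ((real^'n) \<times> real) set) \<and> length us \<le> 2}"
  have "finite ?L" by (rule finite_lists_length_le) simp
  then have "bounded (\<Union>us\<in>?L. iter_dd us b ` {z. 0 \<le> snd z})"
    using b_smooth unfolding smooth_bounded_derivs_def
    by (intro bounded_UN) (auto simp: in_lists_conv_set)
  then obtain B where B: "\<And>y. y \<in> (\<Union>us\<in>?L. iter_dd us b ` {z. 0 \<le> snd z}) \<Longrightarrow> norm y \<le> B"
    unfolding bounded_iff by blast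
  show thesis
  proof (rule that[of "max 0 B"])
    fix us :: "((real^'n) \<times> real) list" and z :: "(real^'n) \<times> real"
    assume "set us \<subseteq> Basis" "length us \<le> 2" "0 \<le> snd z"
    then have "norm (iter_dd us b z) \<le> B" by (intro B) auto
    then show "norm (iter_dd us b z) \<le> max 0 B" by simp
  qed simp
qed

lemma iter_dd_space_direction_expansion:
  "iter_dd [(v, 0)] b z = (\<Sum>e\<in>Basis. ((v, 0) \<bullet> e) *\<^sub>R iter_dd [e] b z)"
  by (rule iter_dd_Cons_Basis_expansion, rule iter_dd_differentiable) simp

lemma transport_second_derivative_expansion:
  "transport_second_derivative b z v =
     iter_dd [(0, 1), (0, 1)] b z
     + 2 *\<^sub>R (\<Sum>e\<in>Basis. ((v, 0) \<bullet> e) *\<^sub>R iter_dd [(0, 1), e] b z)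
     + (\<Sum>e\<in>Basis. ((v, 0) \<bullet> e) *\<^sub>R (\<Sum>e'\<in>Basis. ((v, 0) \<bullet> e') *\<^sub>R iter_dd [e', e] b z))"
proof -
  have inner: "iter_dd [u, (v, 0)] b z = (\<Sum>e\<in>Basis. ((v, 0) \<bullet> e) *\<^sub>R iter_dd [u, e] b z)" for u
    by (intro iter_dd_inner_Basis_expansion iter_dd_differentiable[of "[]", simplified]
        iter_dd_differentiable) auto
  have outer: "iter_dd [(v, 0), e] b z = (\<Sum>e'\<in>Basis. ((v, 0) \<bullet> e') *\<^sub>R iter_dd [e', e] b z)"
    if "e \<in> Basis" for e
    using that by (intro iter_dd_Cons_Basis_expansion iter_dd_differentiable) auto
  show ?thesis
    unfolding transport_second_derivative_def inner by (simp add: outer)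
qed

lemma continuous_transport_second_derivative:
  "continuous_on UNIV (\<lambda>(z, v). transport_second_derivative b z v)"
  unfolding transport_second_derivative_expansion case_prod_beta
  by (intro continuous_intros) (auto simp: time_direction_Basis)

lemma continuous_space_derivative: "continuous_on UNIV (\<lambda>v. iter_dd [(v, 0)] b z)"
  unfolding iter_dd_space_direction_expansion by (intro continuous_intros)

lemma norm_first_order_terms_le:
  assumes "\<And>us. set us \<subseteq> Basis \<Longrightarrow> length us \<le> 1 \<Longrightarrow> norm (iter_dd us b z) \<le> B"
  shows "norm (iter_dd [(0, 1)] b z + iter_dd [(v, 0)] b z)
    \<le> B * (1 + DIM((real^'n) \<times> real) * norm v)"
proof -
  have "norm (iter_dd [(v, 0)] b z) \<le> DIM((real^'n) \<times> real) * norm (v, 0::real) * B"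
    unfolding iter_dd_space_direction_expansion
    by (intro norm_sum_Basis_scaleR_le assms) auto
  moreover have "norm (iter_dd [(0, 1)] b z) \<le> B"
    by (intro assms) (auto simp: time_direction_Basis)
  ultimately have "norm (iter_dd [(0, 1)] b z + iter_dd [(v, 0)] b z)
      \<le> B + DIM((real^'n) \<times> real) * norm v * B"
    using norm_triangle_ineq[of "iter_dd [(0, 1)] b z" "iter_dd [(v, 0)] b z"] by simp
  then show ?thesis by (simp add: algebra_simps)
qed

lemma norm_transport_second_derivative_le:
  fixes B :: real
  assumes "0 \<le> B" and B: "\<And>us. set us \<subseteq> Basis \<Longrightarrow> length us \<le> 2 \<Longrightarrow> norm (iter_dd us b z) \<le> B"
  shows "norm (transport_second_derivative b z v)
    \<le> B * (1 + real DIM((real^'n) \<times> real))\<^sup>2 * (1 + (norm v)\<^sup>2)"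
proof -
  let ?D = "real DIM((real^'n) \<times> real)" and ?x = "norm v"
  have nv: "norm (v, 0::real) = ?x" by simp
  have tt: "norm (iter_dd [(0, 1), (0, 1)] b z) \<le> B"
    by (intro B) (auto simp: time_direction_Basis)
  have "norm (iter_dd [(0, 1), e] b z) \<le> B" if "e \<in> Basis" for e
    using that by (intro B) (auto simp: time_direction_Basis)
  then have tv: "norm (\<Sum>e\<in>Basis. ((v, 0) \<bullet> e) *\<^sub>R iter_dd [(0, 1), e] b z) \<le> ?D * ?x * B"
    using norm_sum_Basis_scaleR_le[of "\<lambda>e. iter_dd [(0, 1), e] b z" B "(v, 0::real)"] nv by simp
  have "norm (\<Sum>e'\<in>Basis. ((v, 0) \<bullet> e') *\<^sub>R iter_dd [e', e] b z) \<le> ?D * ?x * B"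
    if "e \<in> Basis" for e
  proof -
    have "norm (iter_dd [e', e] b z) \<le> B" if "e' \<in> Basis" for e'
      using that \<open>e \<in> Basis\<close> by (intro B) auto
    then show ?thesis
      using norm_sum_Basis_scaleR_le[of "\<lambda>e'. iter_dd [e', e] b z" B "(v, 0::real)"] nv by simp
  qed
  then have vv: "norm (\<Sum>e\<in>Basis. ((v, 0) \<bullet> e) *\<^sub>R
      (\<Sum>e'\<in>Basis. ((v, 0) \<bullet> e') *\<^sub>R iter_dd [e', e] b z)) \<le> ?D * ?x * (?D * ?x * B)"
    using norm_sum_Basis_scaleR_le[of "\<lambda>e. \<Sum>e'\<in>Basis. ((v, 0) \<bullet> e') *\<^sub>R iter_dd [e', e] b z"
        "?D * ?x * B" "(v, 0::real)"] nv by simp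
  have triangle: "norm (a + 2 *\<^sub>R c + d) \<le> norm a + 2 * norm c + norm d"
    for a c d :: "real^'n"
    using norm_triangle_ineq[of "a + 2 *\<^sub>R c" d] norm_triangle_ineq[of a "2 *\<^sub>R c"] by simp
  have "norm (transport_second_derivative b z v) \<le> B + 2 * (?D * ?x * B) + ?D * ?x * (?D * ?x * B)"
    unfolding transport_second_derivative_expansion
    using tt tv vv triangle by (smt (verit))
  also have "\<dots> = B * (1 + ?D * ?x)\<^sup>2"
    by (simp add: power2_eq_square algebra_simps)
  also have "\<dots> \<le> B * ((1 + ?D)\<^sup>2 * (1 + ?x\<^sup>2))"
    by (intro mult_left_mono squared_one_add_mult_le \<open>0 \<le> B\<close>) simp
  finally show ?thesis by (simp only: mult.assoc)
qed

end


section \<open>The exponential kernel and the relaxation equation\<close>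

lemma exp_kernel_has_integral:
  fixes \<epsilon> t :: real
  assumes "0 < \<epsilon>" "0 \<le> t"
  shows "((\<lambda>s. exp (- (t - s) / \<epsilon>)) has_integral \<epsilon> * (1 - exp (- t / \<epsilon>))) {0..t}"
proof -
  have "((\<lambda>s. \<epsilon> * exp (- (t - s) / \<epsilon>)) has_real_derivative exp (- (t - s) / \<epsilon>)) (at s within {0..t})"
    for s
    using assms by (auto intro!: derivative_eq_intros)
  from fundamental_theorem_of_calculus[OF assms(2) this[unfolded has_real_derivative_iff_has_vector_derivative]]
  show ?thesis by (simp add: algebra_simps)
qed

lemma exp_kernel_integral_le:
  fixes \<epsilon> t :: real
  assumes "0 < \<epsilon>" "0 \<le> t"
  shows "integral {0..t} (\<lambda>s. exp (- (t - s) / \<epsilon>)) \<le> \<epsilon>"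
  using integral_unique[OF exp_kernel_has_integral[OF assms]] assms by simp

lemma exp_kernel_lag_integral_le:
  fixes \<epsilon> t :: real
  assumes "0 < \<epsilon>" "0 \<le> t"
  shows "integral {0..t} (\<lambda>s. exp (- (t - s) / \<epsilon>) * (t - s)) \<le> \<epsilon>\<^sup>2"
proof -
  have "((\<lambda>s. \<epsilon> * (t - s + \<epsilon>) * exp (- (t - s) / \<epsilon>)) has_real_derivative
      exp (- (t - s) / \<epsilon>) * (t - s)) (at s within {0..t})" for s
    using assms by (auto intro!: derivative_eq_intros simp: field_simps)
  from fundamental_theorem_of_calculus[OF assms(2) this[unfolded has_real_derivative_iff_has_vector_derivative]]
  have "integral {0..t} (\<lambda>s. exp (- (t - s) / \<epsilon>) * (t - s)) = \<epsilon>\<^sup>2 - \<epsilon> * (t + \<epsilon>) * exp (- t / \<epsilon>)"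
    by (simp add: integral_unique power2_eq_square)
  moreover have "0 \<le> \<epsilon> * (t + \<epsilon>) * exp (- t / \<epsilon>)"
    using assms by simp
  ultimately show ?thesis by linarith
qed

lemma relaxation_equation_solution:
  fixes Y g :: "real \<Rightarrow> 'a::banach"
  assumes "0 < \<epsilon>" "0 \<le> t" "continuous_on {0..t} Y" "continuous_on {0..t} g"
    and eq: "\<And>u. u \<in> {0..t} \<Longrightarrow> Y u = Y 0 + integral {0..u} (\<lambda>s. (1 / \<epsilon>) *\<^sub>R (g s - Y s))"
  shows "Y t = exp (- t / \<epsilon>) *\<^sub>R Y 0 + (1 / \<epsilon>) *\<^sub>R integral {0..t} (\<lambda>s. exp (- (t - s) / \<epsilon>) *\<^sub>R g s)"
proof -
  define h where "h s = (exp (s / \<epsilon>) / \<epsilon>) *\<^sub>R g s" for s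
  have cont: "continuous_on {0..t} (\<lambda>s. (1 / \<epsilon>) *\<^sub>R (g s - Y s))"
    using assms by (intro continuous_intros)
  have dY: "(Y has_vector_derivative (1 / \<epsilon>) *\<^sub>R (g u - Y u)) (at u within {0..t})"
    if u: "u \<in> {0..t}" for u
  proof (rule has_vector_derivative_transform[OF u])
    show "((\<lambda>u. Y 0 + integral {0..u} (\<lambda>s. (1 / \<epsilon>) *\<^sub>R (g s - Y s))) has_vector_derivative
        (1 / \<epsilon>) *\<^sub>R (g u - Y u)) (at u within {0..t})"
      using has_vector_derivative_add[OF has_vector_derivative_const
          integral_has_vector_derivative[OF cont u]] by simp
  qed (metis eq)
  have "((\<lambda>u. exp (u / \<epsilon>) *\<^sub>R Y u) has_vector_derivative h u) (at u within {0..t})"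
    if "u \<in> {0..t}" for u
  proof -
    have "((\<lambda>u. exp (u / \<epsilon>) *\<^sub>R Y u) has_vector_derivative
        exp (u / \<epsilon>) *\<^sub>R ((1 / \<epsilon>) *\<^sub>R (g u - Y u)) + (exp (u / \<epsilon>) * (1 / \<epsilon>)) *\<^sub>R Y u)
        (at u within {0..t})"
      using assms(1) by (intro has_vector_derivative_scaleR dY that) (auto intro!: derivative_eq_intros)
    moreover have "exp (u / \<epsilon>) *\<^sub>R ((1 / \<epsilon>) *\<^sub>R (g u - Y u)) + (exp (u / \<epsilon>) * (1 / \<epsilon>)) *\<^sub>R Y u = h u"
      by (simp add: h_def algebra_simps)
    ultimately show ?thesis by simp
  qed
  from fundamental_theorem_of_calculus[OF assms(2) this]
  have "(h has_integral exp (t / \<epsilon>) *\<^sub>R Y t - Y 0) {0..t}" by simp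
  from has_integral_cmul[OF this, of "\<epsilon> * exp (- t / \<epsilon>)"]
  have "((\<lambda>s. exp (- (t - s) / \<epsilon>) *\<^sub>R g s) has_integral
      (\<epsilon> * exp (- t / \<epsilon>)) *\<^sub>R (exp (t / \<epsilon>) *\<^sub>R Y t - Y 0)) {0..t}"
  proof (rule has_integral_eq[rotated])
    fix s
    have "exp (- (t - s) / \<epsilon>) = exp (- t / \<epsilon>) * exp (s / \<epsilon>)"
      by (simp add: exp_add[symmetric] diff_divide_distrib)
    then show "(\<epsilon> * exp (- t / \<epsilon>)) *\<^sub>R h s = exp (- (t - s) / \<epsilon>) *\<^sub>R g s"
      using assms(1) by (simp add: h_def)
  qed
  moreover have "(1 / \<epsilon>) *\<^sub>R ((\<epsilon> * exp (- t / \<epsilon>)) *\<^sub>R (exp (t / \<epsilon>) *\<^sub>R Y t - Y 0))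
      = Y t - exp (- t / \<epsilon>) *\<^sub>R Y 0"
    using assms(1) by (simp add: scaleR_diff_right exp_minus field_simps)
  ultimately show ?thesis
    by (simp add: integral_unique)
qed

lemma exp_kernel_integral_increments:
  fixes W :: "real \<Rightarrow> 'a::banach"
  assumes "0 < \<epsilon>" "0 \<le> t" "continuous_on {0..t} W"
  shows "integral {0..t} (\<lambda>s. exp (- (t - s) / \<epsilon>) *\<^sub>R W s)
    = (\<epsilon> * (1 - exp (- t / \<epsilon>))) *\<^sub>R W t - integral {0..t} (\<lambda>s. exp (- (t - s) / \<epsilon>) *\<^sub>R (W t - W s))"
proof -
  have int: "(\<lambda>s. exp (- (t - s) / \<epsilon>) *\<^sub>R W s) integrable_on {0..t}"
    "(\<lambda>s. exp (- (t - s) / \<epsilon>) *\<^sub>R W t) integrable_on {0..t}"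
    using assms by (auto intro!: integrable_continuous_interval continuous_intros)
  have "integral {0..t} (\<lambda>s. exp (- (t - s) / \<epsilon>) *\<^sub>R W t) = (\<epsilon> * (1 - exp (- t / \<epsilon>))) *\<^sub>R W t"
    using has_integral_scaleR_left[OF exp_kernel_has_integral[OF assms(1,2)], of "W t"]
    by (simp add: integral_unique)
  then show ?thesis
    using int by (simp add: scaleR_diff_right integral_diff)
qed

lemma noisy_relaxation_representation:
  fixes V g W :: "real \<Rightarrow> 'a::banach"
  assumes "0 < \<epsilon>" "0 \<le> t"
    and cont: "continuous_on {0..t} V" "continuous_on {0..t} g" "continuous_on {0..t} W"
    and "W 0 = 0"
    and eq: "\<And>u. u \<in> {0..t} \<Longrightarrow> V u = V 0 + integral {0..u} (\<lambda>s. (1 / \<epsilon>) *\<^sub>R (g s - V s)) + \<sigma> *\<^sub>R W u"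
  shows "V t = exp (- t / \<epsilon>) *\<^sub>R V 0 + (1 / \<epsilon>) *\<^sub>R integral {0..t} (\<lambda>s. exp (- (t - s) / \<epsilon>) *\<^sub>R g s)
    + \<sigma> *\<^sub>R (exp (- t / \<epsilon>) *\<^sub>R W t
      + (1 / \<epsilon>) *\<^sub>R integral {0..t} (\<lambda>s. exp (- (t - s) / \<epsilon>) *\<^sub>R (W t - W s)))"
proof -
  define k where "k s = exp (- (t - s) / \<epsilon>)" for s
  define e where "e = exp (- t / \<epsilon>)"
  define Ig where "Ig = integral {0..t} (\<lambda>s. k s *\<^sub>R g s)"
  define IW where "IW = integral {0..t} (\<lambda>s. k s *\<^sub>R W s)"
  define ID where "ID = integral {0..t} (\<lambda>s. k s *\<^sub>R (W t - W s))"
  \<comment> \<open>\<open>V - \<sigma> W\<close> solves the noiseless equation with forcing \<open>g - \<sigma> W\<close>\<close>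
  have "V t - \<sigma> *\<^sub>R W t = e *\<^sub>R (V 0 - \<sigma> *\<^sub>R W 0) + (1 / \<epsilon>) *\<^sub>R integral {0..t} (\<lambda>s. k s *\<^sub>R (g s - \<sigma> *\<^sub>R W s))"
    unfolding k_def e_def
  proof (rule relaxation_equation_solution)
    fix u assume u: "u \<in> {0..t}"
    have "(\<lambda>s. (1 / \<epsilon>) *\<^sub>R ((g s - \<sigma> *\<^sub>R W s) - (V s - \<sigma> *\<^sub>R W s))) = (\<lambda>s. (1 / \<epsilon>) *\<^sub>R (g s - V s))"
      by (simp add: algebra_simps)
    then show "V u - \<sigma> *\<^sub>R W u = V 0 - \<sigma> *\<^sub>R W 0
        + integral {0..u} (\<lambda>s. (1 / \<epsilon>) *\<^sub>R ((g s - \<sigma> *\<^sub>R W s) - (V s - \<sigma> *\<^sub>R W s)))"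
      using eq[OF u] \<open>W 0 = 0\<close> by simp
  qed (use assms in \<open>auto intro!: continuous_intros\<close>)
  moreover have "integral {0..t} (\<lambda>s. k s *\<^sub>R (g s - \<sigma> *\<^sub>R W s)) = Ig - \<sigma> *\<^sub>R IW"
  proof -
    have "(\<lambda>s. k s *\<^sub>R (g s - \<sigma> *\<^sub>R W s)) = (\<lambda>s. k s *\<^sub>R g s - \<sigma> *\<^sub>R (k s *\<^sub>R W s))"
      by (simp add: algebra_simps)
    moreover have "(\<lambda>s. k s *\<^sub>R g s) integrable_on {0..t}" "(\<lambda>s. k s *\<^sub>R W s) integrable_on {0..t}"
      using assms by (auto simp: k_def intro!: integrable_continuous_interval continuous_intros)
    ultimately show ?thesis
      unfolding Ig_def IW_def by (simp only: integral_diff integrable_cmul integral_cmul)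
  qed
  moreover have "IW = (\<epsilon> * (1 - e)) *\<^sub>R W t - ID"
    unfolding IW_def ID_def k_def e_def by (rule exp_kernel_integral_increments[OF assms(1,2,5)])
  ultimately have "V t = e *\<^sub>R V 0 + (1 / \<epsilon>) *\<^sub>R (Ig - \<sigma> *\<^sub>R ((\<epsilon> * (1 - e)) *\<^sub>R W t - ID)) + \<sigma> *\<^sub>R W t"
    using \<open>W 0 = 0\<close> by (simp add: diff_eq_eq)
  also have "\<dots> = e *\<^sub>R V 0 + (1 / \<epsilon>) *\<^sub>R Ig + \<sigma> *\<^sub>R (e *\<^sub>R W t + (1 / \<epsilon>) *\<^sub>R ID)"
  proof -
    have "(1 / \<epsilon>) *\<^sub>R (\<sigma> *\<^sub>R ((\<epsilon> * (1 - e)) *\<^sub>R W t)) = (\<sigma> - \<sigma> * e) *\<^sub>R W t"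
      using assms(1) by (simp add: field_simps)
    then show ?thesis by (simp add: algebra_simps)
  qed
  finally show ?thesis by (simp add: k_def e_def Ig_def ID_def)
qed

lemma norm_integral_weighted_squared_le:
  fixes w :: "real \<Rightarrow> real" and f :: "real \<Rightarrow> 'a::euclidean_space"
  assumes cw: "continuous_on {a..b} w" and cf: "continuous_on {a..b} f"
    and w_nonneg: "\<And>s. s \<in> {a..b} \<Longrightarrow> 0 \<le> w s" and w_mass: "integral {a..b} w \<le> 1"
  shows "(norm (integral {a..b} (\<lambda>s. w s *\<^sub>R f s)))\<^sup>2 \<le> integral {a..b} (\<lambda>s. w s * (norm (f s))\<^sup>2)"
proof -
  define c where "c = integral {a..b} (\<lambda>s. w s *\<^sub>R f s)"
  have int: "(\<lambda>s. w s *\<^sub>R f s) integrable_on {a..b}" "w integrable_on {a..b}"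
    "(\<lambda>s. (w s *\<^sub>R f s) \<bullet> c) integrable_on {a..b}" "(\<lambda>s. w s * (norm c)\<^sup>2) integrable_on {a..b}"
    "(\<lambda>s. w s * (norm (f s))\<^sup>2) integrable_on {a..b}"
    by (intro integrable_continuous_interval continuous_intros cw cf)+
  \<comment> \<open>integrate the pointwise inequality \<open>2 (f s \<bullet> c) - |c|^2 \<le> |f s|^2\<close> against \<open>w\<close>\<close>
  have "2 * (norm c)\<^sup>2 - (norm c)\<^sup>2 * integral {a..b} w
      = integral {a..b} (\<lambda>s. 2 * ((w s *\<^sub>R f s) \<bullet> c) - w s * (norm c)\<^sup>2)"
    using int integral_component_eq[OF int(1), of c]
    by (simp add: c_def power2_norm_eq_inner integral_diff)
  also have "\<dots> \<le> integral {a..b} (\<lambda>s. w s * (norm (f s))\<^sup>2)"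
  proof (rule integral_le)
    show "(\<lambda>s. 2 * ((w s *\<^sub>R f s) \<bullet> c) - w s * (norm c)\<^sup>2) integrable_on {a..b}"
      using int by (intro integrable_diff integrable_on_cmult_left) auto
    fix s assume s: "s \<in> {a..b}"
    have "0 \<le> (norm (f s - c))\<^sup>2" by simp
    then have "2 * (f s \<bullet> c) - (norm c)\<^sup>2 \<le> (norm (f s))\<^sup>2"
      by (simp add: power2_norm_eq_inner inner_diff_left inner_diff_right inner_commute)
    then have "w s * (2 * (f s \<bullet> c) - (norm c)\<^sup>2) \<le> w s * (norm (f s))\<^sup>2"
      by (rule mult_left_mono[OF _ w_nonneg[OF s]])
    then show "2 * ((w s *\<^sub>R f s) \<bullet> c) - w s * (norm c)\<^sup>2 \<le> w s * (norm (f s))\<^sup>2"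
      by (simp add: algebra_simps)
  qed (use int in auto)
  finally show ?thesis
    using mult_left_mono[OF w_mass, of "(norm c)\<^sup>2"] by (simp add: c_def)
qed

lemma norm_exp_kernel_average_le:
  fixes f :: "real \<Rightarrow> 'a::euclidean_space"
  assumes "0 < \<epsilon>" "0 \<le> t" "continuous_on {0..t} f" "\<And>s. s \<in> {0..t} \<Longrightarrow> norm (f s) \<le> B"
  shows "norm ((1 / \<epsilon>) *\<^sub>R integral {0..t} (\<lambda>s. exp (- (t - s) / \<epsilon>) *\<^sub>R f s)) \<le> B"
proof -
  have "norm (integral {0..t} (\<lambda>s. exp (- (t - s) / \<epsilon>) *\<^sub>R f s))
      \<le> integral {0..t} (\<lambda>s. exp (- (t - s) / \<epsilon>) * B)"
    using assms
    by (intro integral_norm_bound_integral integrable_continuous_interval continuous_intros)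
      (auto intro: mult_left_mono)
  also have "\<dots> = B * (\<epsilon> * (1 - exp (- t / \<epsilon>)))"
    using integral_unique[OF exp_kernel_has_integral[OF assms(1,2)]] by simp
  also have "\<dots> \<le> B * \<epsilon>"
  proof (rule mult_left_mono)
    show "0 \<le> B" using assms(2) assms(4)[of 0] by (auto intro: order_trans[OF norm_ge_zero])
    show "\<epsilon> * (1 - exp (- t / \<epsilon>)) \<le> \<epsilon>" using assms(1) by (simp add: algebra_simps)
  qed
  finally show ?thesis using assms(1) by (simp add: field_simps)
qed

lemma norm_exp_kernel_average_squared_le:
  fixes f :: "real \<Rightarrow> 'a::euclidean_space"
  assumes "0 < \<epsilon>" "0 \<le> t" "continuous_on {0..t} f"
  shows "(norm ((1 / \<epsilon>) *\<^sub>R integral {0..t} (\<lambda>s. exp (- (t - s) / \<epsilon>) *\<^sub>R f s)))\<^sup>2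
    \<le> (1 / \<epsilon>) * integral {0..t} (\<lambda>s. exp (- (t - s) / \<epsilon>) * (norm (f s))\<^sup>2)"
proof -
  have "(1 / \<epsilon>) *\<^sub>R integral {0..t} (\<lambda>s. exp (- (t - s) / \<epsilon>) *\<^sub>R f s)
      = integral {0..t} (\<lambda>s. (exp (- (t - s) / \<epsilon>) / \<epsilon>) *\<^sub>R f s)"
    by (simp flip: integral_cmul)
  also have "(norm \<dots>)\<^sup>2 \<le> integral {0..t} (\<lambda>s. exp (- (t - s) / \<epsilon>) / \<epsilon> * (norm (f s))\<^sup>2)"
  proof (rule norm_integral_weighted_squared_le)
    show "integral {0..t} (\<lambda>s. exp (- (t - s) / \<epsilon>) / \<epsilon>) \<le> 1"
      using integral_unique[OF exp_kernel_has_integral[OF assms(1,2)]] assms by simp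
  qed (use assms in \<open>auto intro!: continuous_intros\<close>)
  also have "\<dots> = (1 / \<epsilon>) * integral {0..t} (\<lambda>s. exp (- (t - s) / \<epsilon>) * (norm (f s))\<^sup>2)"
    by simp
  finally show ?thesis .
qed

lemma noisy_relaxation_squared_norm_le:
  fixes V g W :: "real \<Rightarrow> 'a::euclidean_space"
  assumes "0 < \<epsilon>" "0 \<le> t"
    and cont: "continuous_on {0..t} V" "continuous_on {0..t} g" "continuous_on {0..t} W"
    and "W 0 = 0"
    and eq: "\<And>u. u \<in> {0..t} \<Longrightarrow> V u = V 0 + integral {0..u} (\<lambda>s. (1 / \<epsilon>) *\<^sub>R (g s - V s)) + \<sigma> *\<^sub>R W u"
    and bound: "\<And>u. u \<in> {0..t} \<Longrightarrow> norm (g u) \<le> B"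
  shows "(norm (V t))\<^sup>2 \<le> 3 * (norm (V 0))\<^sup>2 + 3 * B\<^sup>2
    + 6 * \<sigma>\<^sup>2 * ((exp (- t / \<epsilon>))\<^sup>2 * (norm (W t))\<^sup>2
      + (1 / \<epsilon>) * integral {0..t} (\<lambda>s. exp (- (t - s) / \<epsilon>) * (norm (W t - W s))\<^sup>2))"
proof -
  define e where "e = exp (- t / \<epsilon>)"
  define A where "A = (1 / \<epsilon>) *\<^sub>R integral {0..t} (\<lambda>s. exp (- (t - s) / \<epsilon>) *\<^sub>R g s)"
  define D where "D = (1 / \<epsilon>) *\<^sub>R integral {0..t} (\<lambda>s. exp (- (t - s) / \<epsilon>) *\<^sub>R (W t - W s))"
  define J where "J = (1 / \<epsilon>) * integral {0..t} (\<lambda>s. exp (- (t - s) / \<epsilon>) * (norm (W t - W s))\<^sup>2)"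
  have e: "0 \<le> e" "e \<le> 1" unfolding e_def using assms(1,2) by auto
  have rep: "V t = e *\<^sub>R V 0 + A + \<sigma> *\<^sub>R (e *\<^sub>R W t + D)"
    unfolding e_def A_def D_def by (rule noisy_relaxation_representation[OF assms(1-7)])
  have "norm A \<le> B"
    unfolding A_def by (rule norm_exp_kernel_average_le[OF assms(1,2) cont(2) bound])
  moreover have "(norm D)\<^sup>2 \<le> J"
    unfolding D_def J_def using cont(3)
    by (intro norm_exp_kernel_average_squared_le[OF assms(1,2)] continuous_intros) auto
  moreover have "e\<^sup>2 \<le> 1" using e by (simp add: power_le_one)
  ultimately have "(norm (e *\<^sub>R V 0))\<^sup>2 \<le> (norm (V 0))\<^sup>2" "(norm A)\<^sup>2 \<le> B\<^sup>2"
    "(norm (\<sigma> *\<^sub>R (e *\<^sub>R W t + D)))\<^sup>2 \<le> \<sigma>\<^sup>2 * (2 * (e\<^sup>2 * (norm (W t))\<^sup>2 + J))"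
    using norm_add_squared_le[of "e *\<^sub>R W t" D] e
    by (auto simp: power_mult_distrib mult_left_le_one_le power_mono intro!: mult_left_mono)
  then have "3 * ((norm (e *\<^sub>R V 0))\<^sup>2 + (norm A)\<^sup>2 + (norm (\<sigma> *\<^sub>R (e *\<^sub>R W t + D)))\<^sup>2)
      \<le> 3 * ((norm (V 0))\<^sup>2 + B\<^sup>2 + \<sigma>\<^sup>2 * (2 * (e\<^sup>2 * (norm (W t))\<^sup>2 + J)))"
    by (intro mult_left_mono add_mono) auto
  with norm_add3_squared_le[of "e *\<^sub>R V 0" A "\<sigma> *\<^sub>R (e *\<^sub>R W t + D)"]
  show ?thesis unfolding rep by (simp add: e_def J_def algebra_simps)
qed

section \<open>Processes with continuous paths\<close>

lemma LIMSEQ_floor_grid: "(\<lambda>k. real_of_int \<lfloor>real (Suc k) * x\<rfloor> / real (Suc k)) \<longlonglongrightarrow> x"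
proof (rule real_tendsto_sandwich[where f = "\<lambda>k. x - 1 / real (Suc k)" and h = "\<lambda>k. x"])
  have "(\<lambda>k. 1 / real (Suc k)) \<longlonglongrightarrow> 0"
    by (rule LIMSEQ_Suc[OF lim_const_over_n])
  then show "(\<lambda>k. x - 1 / real (Suc k)) \<longlonglongrightarrow> x"
    using tendsto_diff[OF tendsto_const[of x]] by fastforce
  show "\<forall>\<^sub>F k in sequentially. x - 1 / real (Suc k) \<le> real_of_int \<lfloor>real (Suc k) * x\<rfloor> / real (Suc k)"
  proof (intro always_eventually allI)
    fix k
    have "real (Suc k) * x - 1 \<le> real_of_int \<lfloor>real (Suc k) * x\<rfloor>" by linarith
    then have "(real (Suc k) * x - 1) / real (Suc k) \<le> real_of_int \<lfloor>real (Suc k) * x\<rfloor> / real (Suc k)"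
      by (intro divide_right_mono) auto
    moreover have "(real (Suc k) * x - 1) / real (Suc k) = x - 1 / real (Suc k)"
      by (simp add: field_simps)
    ultimately show "x - 1 / real (Suc k) \<le> real_of_int \<lfloor>real (Suc k) * x\<rfloor> / real (Suc k)"
      by simp
  qed
  show "\<forall>\<^sub>F k in sequentially. real_of_int \<lfloor>real (Suc k) * x\<rfloor> / real (Suc k) \<le> x"
    by (intro always_eventually allI) (simp add: field_simps)
qed simp

lemma measurable_clamped_continuous_process:
  fixes f :: "real \<Rightarrow> 'a \<Rightarrow> 'b::{metric_space, second_countable_topology}"
  assumes "a \<le> b"
    and meas: "\<And>s. s \<in> {a..b} \<Longrightarrow> f s \<in> borel_measurable M"
    and cont: "\<And>\<omega>. \<omega> \<in> space M \<Longrightarrow> continuous_on {a..b} (\<lambda>s. f s \<omega>)"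
  shows "(\<lambda>(\<omega>, s). f (max a (min b s)) \<omega>) \<in> borel_measurable (M \<Otimes>\<^sub>M lborel)"
proof (rule borel_measurable_LIMSEQ_metric)
  let ?clamp = "\<lambda>s. max a (min b s)"
  have clamp: "?clamp s \<in> {a..b}" for s using \<open>a \<le> b\<close> by auto
  fix k :: nat
  show "(\<lambda>z. f (?clamp (real_of_int \<lfloor>real (Suc k) * snd z\<rfloor> / real (Suc k))) (fst z))
      \<in> borel_measurable (M \<Otimes>\<^sub>M lborel)"
  proof (rule measurable_compose_countable[where f = "\<lambda>j z. f (?clamp (real_of_int j / real (Suc k))) (fst z)"])
    fix j :: int
    show "(\<lambda>z. f (?clamp (real_of_int j / real (Suc k))) (fst z)) \<in> borel_measurable (M \<Otimes>\<^sub>M lborel)"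
      using meas[OF clamp[of "real_of_int j / real (Suc k)"]] by measurable
  qed measurable
next
  fix z :: "'a \<times> real"
  assume "z \<in> space (M \<Otimes>\<^sub>M lborel)"
  then have "continuous_on {a..b} (\<lambda>s. f s (fst z))"
    by (intro cont) (simp add: space_pair_measure mem_Times_iff)
  moreover have "(\<lambda>k. max a (min b (real_of_int \<lfloor>real (Suc k) * snd z\<rfloor> / real (Suc k))))
      \<longlonglongrightarrow> max a (min b (snd z))"
    by (intro tendsto_max tendsto_min tendsto_const LIMSEQ_floor_grid)
  ultimately show "(\<lambda>k. f (max a (min b (real_of_int \<lfloor>real (Suc k) * snd z\<rfloor> / real (Suc k)))) (fst z))
      \<longlonglongrightarrow> (case z of (\<omega>, s) \<Rightarrow> f (max a (min b s)) \<omega>)"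
    unfolding case_prod_beta
    by (rule continuous_on_tendsto_compose) (use \<open>a \<le> b\<close> in \<open>auto intro: always_eventually\<close>)
qed

lemma nn_integral_interval_eq_integral:
  fixes f :: "real \<Rightarrow> real"
  assumes "continuous_on {a..b} f" "\<And>s. s \<in> {a..b} \<Longrightarrow> 0 \<le> f s"
  shows "(\<integral>\<^sup>+s. ennreal (indicator {a..b} s * f s) \<partial>lborel) = ennreal (integral {a..b} f)"
  using assms
  by (intro nn_integral_has_integral_lebesgue integrable_integral integrable_continuous_interval) auto

lemma borel_measurable_integral_continuous_process:
  fixes F :: "real \<Rightarrow> 'a \<Rightarrow> 'b::euclidean_space"
  assumes "a \<le> b"
    and meas: "\<And>s. s \<in> {a..b} \<Longrightarrow> F s \<in> borel_measurable M"
    and cont: "\<And>\<omega>. \<omega> \<in> space M \<Longrightarrow> continuous_on {a..b} (\<lambda>s. F s \<omega>)"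
  shows "(\<lambda>\<omega>. integral {a..b} (\<lambda>s. F s \<omega>)) \<in> borel_measurable M"
proof -
  let ?G = "\<lambda>\<omega> s. indicator {a..b} s *\<^sub>R F (max a (min b s)) \<omega>"
  have "(\<lambda>(\<omega>, s). ?G \<omega> s) \<in> borel_measurable (M \<Otimes>\<^sub>M lborel)"
    using measurable_clamped_continuous_process[OF assms] by measurable
  then have "(\<lambda>\<omega>. \<integral>s. ?G \<omega> s \<partial>lborel) \<in> borel_measurable M"
    by (rule lborel.borel_measurable_lebesgue_integral)
  moreover have "(\<integral>s. ?G \<omega> s \<partial>lborel) = integral {a..b} (\<lambda>s. F s \<omega>)" if "\<omega> \<in> space M" for \<omega>
  proof -
    have "(\<integral>s. ?G \<omega> s \<partial>lborel) = (LINT s:{a..b}|lborel. F s \<omega>)"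
      unfolding set_lebesgue_integral_def
      by (intro Bochner_Integration.integral_cong) (auto simp: indicator_def)
    also have "\<dots> = integral {a..b} (\<lambda>s. F s \<omega>)"
      using cont[OF that] by (intro set_borel_integral_eq_integral borel_integrable_atLeastAtMost')
    finally show ?thesis .
  qed
  ultimately show ?thesis by (simp cong: measurable_cong)
qed

lemma nn_integral_integral_continuous_process_le:
  fixes F :: "real \<Rightarrow> 'a \<Rightarrow> real" and g :: "real \<Rightarrow> real"
  assumes "sigma_finite_measure M" "a \<le> b"
    and meas: "\<And>s. s \<in> {a..b} \<Longrightarrow> F s \<in> borel_measurable M"
    and cont: "\<And>\<omega>. \<omega> \<in> space M \<Longrightarrow> continuous_on {a..b} (\<lambda>s. F s \<omega>)"
    and F_nonneg: "\<And>s \<omega>. s \<in> {a..b} \<Longrightarrow> \<omega> \<in> space M \<Longrightarrow> 0 \<le> F s \<omega>"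
    and bound: "\<And>s. s \<in> {a..b} \<Longrightarrow> (\<integral>\<^sup>+\<omega>. F s \<omega> \<partial>M) \<le> ennreal (g s)"
    and "continuous_on {a..b} g" "\<And>s. s \<in> {a..b} \<Longrightarrow> 0 \<le> g s"
  shows "(\<integral>\<^sup>+\<omega>. integral {a..b} (\<lambda>s. F s \<omega>) \<partial>M) \<le> ennreal (integral {a..b} g)"
proof -
  interpret pair_sigma_finite M lborel
    by (simp add: pair_sigma_finite_def assms(1) lborel.sigma_finite_measure_axioms)
  let ?G = "\<lambda>\<omega> s. ennreal (indicator {a..b} s * F (max a (min b s)) \<omega>)"
  have "(\<lambda>(\<omega>, s). ?G \<omega> s) \<in> borel_measurable (M \<Otimes>\<^sub>M lborel)"
    using measurable_clamped_continuous_process[OF assms(2) meas cont] by measurable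
  have "(\<integral>\<^sup>+\<omega>. integral {a..b} (\<lambda>s. F s \<omega>) \<partial>M) = (\<integral>\<^sup>+\<omega>. (\<integral>\<^sup>+s. ?G \<omega> s \<partial>lborel) \<partial>M)"
  proof (rule nn_integral_cong)
    fix \<omega> assume "\<omega> \<in> space M"
    then have "(\<integral>\<^sup>+s. ?G \<omega> s \<partial>lborel) = ennreal (integral {a..b} (\<lambda>s. F s \<omega>))"
      using cont F_nonneg
      by (subst nn_integral_interval_eq_integral[symmetric])
        (auto intro!: nn_integral_cong simp: indicator_def)
    then show "ennreal (integral {a..b} (\<lambda>s. F s \<omega>)) = (\<integral>\<^sup>+s. ?G \<omega> s \<partial>lborel)" by simp
  qed
  also have "\<dots> = (\<integral>\<^sup>+s. (\<integral>\<^sup>+\<omega>. ?G \<omega> s \<partial>M) \<partial>lborel)"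
    by (rule Fubini'[symmetric]) fact
  also have "\<dots> \<le> (\<integral>\<^sup>+s. ennreal (indicator {a..b} s * g s) \<partial>lborel)"
  proof (rule nn_integral_mono)
    fix s :: real
    show "(\<integral>\<^sup>+\<omega>. ?G \<omega> s \<partial>M) \<le> ennreal (indicator {a..b} s * g s)"
    proof (cases "s \<in> {a..b}")
      case True
      then have "(\<integral>\<^sup>+\<omega>. ?G \<omega> s \<partial>M) = (\<integral>\<^sup>+\<omega>. F s \<omega> \<partial>M)"
        by (intro nn_integral_cong) simp
      then show ?thesis using bound[OF True] True by simp
    qed simp
  qed
  also have "\<dots> = ennreal (integral {a..b} g)"
    by (rule nn_integral_interval_eq_integral) fact+
  finally show ?thesis .
qed

lemma borel_measurable_vec_nth [measurable (raw)]:
  assumes "f \<in> borel_measurable M"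
  shows "(\<lambda>x. (f x :: real^'n) $ i) \<in> borel_measurable M"
proof -
  have "(\<lambda>x. f x \<bullet> axis i 1) \<in> borel_measurable M" using assms by measurable
  then show ?thesis by (simp add: cart_eq_inner_axis)
qed

lemma normal_density_second_moment:
  assumes "0 < \<sigma>"
  shows "(\<integral>\<^sup>+y. ennreal (normal_density 0 \<sigma> y) * ennreal (y\<^sup>2) \<partial>lborel) = ennreal (\<sigma>\<^sup>2)"
proof -
  have "(\<integral>\<^sup>+y. ennreal (normal_density 0 \<sigma> y) * ennreal (y\<^sup>2) \<partial>lborel)
      = (\<integral>\<^sup>+y. ennreal (normal_density 0 \<sigma> y * (y - 0) ^ (2 * 1)) \<partial>lborel)"
    by (intro nn_integral_cong) (simp add: ennreal_mult[symmetric])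
  also have "\<dots> = ennreal (\<integral>y. normal_density 0 \<sigma> y * (y - 0) ^ (2 * 1) \<partial>lborel)"
    using assms by (intro nn_integral_eq_integral integrable_normal_moment) auto
  also have "(\<integral>y. normal_density 0 \<sigma> y * (y - 0) ^ (2 * 1) \<partial>lborel) = \<sigma>\<^sup>2"
    using integral_normal_moment_even[OF assms, of 0 1] by simp
  finally show ?thesis .
qed

lemma std_brownian_motion_increment_second_moment:
  fixes W :: "real \<Rightarrow> 'a \<Rightarrow> real^'n" and s t :: real
  assumes bm: "std_brownian_motion M W" and "0 \<le> s" "s \<le> t"
  shows "(\<integral>\<^sup>+\<omega>. (norm (W t \<omega> - W s \<omega>))\<^sup>2 \<partial>M) = ennreal (CARD('n) * (t - s))"
proof (cases "s = t")
  case False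
  then have "s < t" using assms(3) by simp
  have [measurable]: "W u \<in> borel_measurable M" for u
    using bm unfolding std_brownian_motion_def by blast
  have D: "distributed M lborel (\<lambda>\<omega>. (W t \<omega> - W s \<omega>) $ i)
      (\<lambda>y. ennreal (normal_density 0 (sqrt (t - s)) y))" for i
  proof -
    have "sorted_wrt (<) [s, t] \<and> (\<forall>u\<in>set [s, t]. 0 \<le> u)"
      using \<open>s < t\<close> assms(2) by auto
    with bm show ?thesis
      unfolding std_brownian_motion_def by (auto dest!: spec[of _ "[s, t]"])
  qed
  have "(\<integral>\<^sup>+\<omega>. (norm (W t \<omega> - W s \<omega>))\<^sup>2 \<partial>M)
      = (\<integral>\<^sup>+\<omega>. (\<Sum>i\<in>UNIV. ennreal (((W t \<omega> - W s \<omega>) $ i)\<^sup>2)) \<partial>M)"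
  proof (intro nn_integral_cong)
    have "(norm x)\<^sup>2 = (\<Sum>i\<in>UNIV. (x $ i)\<^sup>2)" for x :: "real^'n"
      unfolding power2_norm_eq_inner inner_vec_def by (simp add: power2_eq_square)
    then show "ennreal ((norm (W t \<omega> - W s \<omega>))\<^sup>2) = (\<Sum>i\<in>UNIV. ennreal (((W t \<omega> - W s \<omega>) $ i)\<^sup>2))"
      for \<omega> by simp
  qed
  also have "\<dots> = (\<Sum>i\<in>UNIV. (\<integral>\<^sup>+\<omega>. ennreal (((W t \<omega> - W s \<omega>) $ i)\<^sup>2) \<partial>M))"
    by (intro nn_integral_sum) measurable
  also have "\<dots> = (\<Sum>i\<in>(UNIV::'n set). ennreal (t - s))"
  proof (rule sum.cong[OF refl])
    fix i :: 'n
    have "(\<integral>\<^sup>+\<omega>. ennreal (((W t \<omega> - W s \<omega>) $ i)\<^sup>2) \<partial>M)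
        = (\<integral>\<^sup>+y. ennreal (normal_density 0 (sqrt (t - s)) y) * ennreal (y\<^sup>2) \<partial>lborel)"
      by (rule distributed_nn_integral[OF D, symmetric]) measurable
    also have "\<dots> = ennreal (t - s)"
      using \<open>s < t\<close> by (simp add: normal_density_second_moment)
    finally show "(\<integral>\<^sup>+\<omega>. ennreal (((W t \<omega> - W s \<omega>) $ i)\<^sup>2) \<partial>M) = ennreal (t - s)" .
  qed
  also have "\<dots> = ennreal (CARD('n) * (t - s))"
    using \<open>s < t\<close> by (simp add: ennreal_mult ennreal_of_nat_eq_real_of_nat)
  finally show ?thesis .
qed simp

lemma nn_integral_scaled_add:
  fixes f g :: "'a \<Rightarrow> real"
  assumes "f \<in> borel_measurable M" "g \<in> borel_measurable M"
    and "\<And>x. x \<in> space M \<Longrightarrow> 0 \<le> f x" "\<And>x. x \<in> space M \<Longrightarrow> 0 \<le> g x" "0 \<le> a" "0 \<le> c"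
  shows "(\<integral>\<^sup>+x. a * f x + c * g x \<partial>M) = ennreal a * (\<integral>\<^sup>+x. f x \<partial>M) + ennreal c * (\<integral>\<^sup>+x. g x \<partial>M)"
proof -
  have "(\<integral>\<^sup>+x. a * f x + c * g x \<partial>M) = (\<integral>\<^sup>+x. ennreal a * f x + ennreal c * g x \<partial>M)"
    using assms(3-6) by (intro nn_integral_cong) (simp add: ennreal_mult)
  also have "\<dots> = ennreal a * (\<integral>\<^sup>+x. f x \<partial>M) + ennreal c * (\<integral>\<^sup>+x. g x \<partial>M)"
    using assms(1,2) by (simp add: nn_integral_add nn_integral_cmult)
  finally show ?thesis .
qed

lemma nn_integral_le_imp_integrable_integral_le:
  fixes f :: "'a \<Rightarrow> real"
  assumes "f \<in> borel_measurable M" "\<And>x. x \<in> space M \<Longrightarrow> 0 \<le> f x"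
    and "(\<integral>\<^sup>+x. f x \<partial>M) \<le> ennreal c" "0 \<le> c"
  shows "integrable M f \<and> (\<integral>x. f x \<partial>M) \<le> c"
proof
  show "integrable M f"
    using assms by (intro integrableI_nonneg) (auto simp: order_le_less_trans)
  show "(\<integral>x. f x \<partial>M) \<le> c"
    by (rule integral_real_bounded[OF assms(4,3)])
qed

lemma (in prob_space) first_moment_le_of_powr_moment:
  fixes Y :: "'a \<Rightarrow> 'b::euclidean_space"
  assumes "Y \<in> borel_measurable M" "integrable M (\<lambda>\<omega>. norm (Y \<omega> - c) powr p)"
    and "(\<integral>\<omega>. norm (Y \<omega> - c) powr p \<partial>M) \<le> Mp" "1 \<le> p"
  shows "integrable M (\<lambda>\<omega>. norm (Y \<omega>)) \<and> (\<integral>\<omega>. norm (Y \<omega>) \<partial>M) \<le> 1 + Mp + norm c"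
proof
  have bound: "norm (Y \<omega>) \<le> 1 + norm (Y \<omega> - c) powr p + norm c" for \<omega>
    using norm_triangle_ineq[of "Y \<omega> - c" c] powr_le_one_add_powr[of "norm (Y \<omega> - c)" 1 p] assms(4)
    by simp
  have int: "integrable M (\<lambda>\<omega>. 1 + norm (Y \<omega> - c) powr p + norm c)"
    using assms(2) by simp
  show "integrable M (\<lambda>\<omega>. norm (Y \<omega>))"
    using bound assms(1) by (intro Bochner_Integration.integrable_bound[OF int]) auto
  then have "(\<integral>\<omega>. norm (Y \<omega>) \<partial>M) \<le> (\<integral>\<omega>. 1 + norm (Y \<omega> - c) powr p + norm c \<partial>M)"
    using int bound by (intro integral_mono) auto
  also have "\<dots> \<le> 1 + Mp + norm c"
    using assms(2,3) by (simp add: prob_space)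
  finally show "(\<integral>\<omega>. norm (Y \<omega>) \<partial>M) \<le> 1 + Mp + norm c" .
qed

lemma (in prob_space) second_moment_le_of_powr_moment:
  fixes Y :: "'a \<Rightarrow> 'b::euclidean_space"
  assumes "Y \<in> borel_measurable M" "integrable M (\<lambda>\<omega>. norm (Y \<omega> - c) powr p)"
    and "(\<integral>\<omega>. norm (Y \<omega> - c) powr p \<partial>M) \<le> Mp" "2 \<le> p"
  shows "(\<integral>\<^sup>+\<omega>. (norm (Y \<omega>))\<^sup>2 \<partial>M) \<le> ennreal (2 * (1 + Mp + (norm c)\<^sup>2))"
proof -
  have "(norm (Y \<omega>))\<^sup>2 \<le> 2 * (1 + norm (Y \<omega> - c) powr p + (norm c)\<^sup>2)" for \<omega>
  proof -
    have "(norm (Y \<omega> - c))\<^sup>2 \<le> 1 + norm (Y \<omega> - c) powr p"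
      using powr_le_one_add_powr[of "norm (Y \<omega> - c)" 2 p] assms(4) by simp
    then show ?thesis
      using norm_add_squared_le[of "Y \<omega> - c" c] by simp
  qed
  then have "(\<integral>\<^sup>+\<omega>. (norm (Y \<omega>))\<^sup>2 \<partial>M) \<le> (\<integral>\<^sup>+\<omega>. 2 * (1 + norm (Y \<omega> - c) powr p + (norm c)\<^sup>2) \<partial>M)"
    by (intro nn_integral_mono ennreal_leI)
  also have "\<dots> = ennreal (\<integral>\<omega>. 2 * (1 + norm (Y \<omega> - c) powr p + (norm c)\<^sup>2) \<partial>M)"
    using assms(2) by (intro nn_integral_eq_integral) auto
  also have "\<dots> \<le> ennreal (2 * (1 + Mp + (norm c)\<^sup>2))"
    using assms(2,3) by (intro ennreal_leI) (simp add: prob_space)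
  finally show ?thesis .
qed

lemma (in prob_space) initial_remainder_expectation_le:
  fixes b :: "(real^'n) \<times> real \<Rightarrow> real^'n" and Y :: "'a \<Rightarrow> real^'n" and B c m :: real
  assumes "smooth_bounded_derivs b" "0 \<le> B" "0 \<le> c"
    and B: "\<And>us. set us \<subseteq> Basis \<Longrightarrow> length us \<le> 1 \<Longrightarrow> norm (iter_dd us b z) \<le> B"
    and "Y \<in> borel_measurable M" "integrable M (\<lambda>\<omega>. norm (Y \<omega>))" "(\<integral>\<omega>. norm (Y \<omega>) \<partial>M) \<le> m"
  shows "integrable M (\<lambda>\<omega>. norm (c *\<^sub>R (iter_dd [(0, 1)] b z + iter_dd [(Y \<omega>, 0)] b z)))
    \<and> (\<integral>\<omega>. norm (c *\<^sub>R (iter_dd [(0, 1)] b z + iter_dd [(Y \<omega>, 0)] b z)) \<partial>M)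
      \<le> c * B * (1 + DIM((real^'n) \<times> real) * m)"
proof
  let ?R = "\<lambda>\<omega>. norm (c *\<^sub>R (iter_dd [(0, 1)] b z + iter_dd [(Y \<omega>, 0)] b z))"
  let ?G = "\<lambda>\<omega>. c * (B * (1 + DIM((real^'n) \<times> real) * norm (Y \<omega>)))"
  have "(\<lambda>v. iter_dd [(v, 0)] b z) \<in> borel_measurable borel"
    by (rule borel_measurable_continuous_onI[OF continuous_space_derivative[OF assms(1)]])
  from measurable_compose[OF assms(5) this] have R_measurable: "?R \<in> borel_measurable M"
    by measurable
  have bound: "?R \<omega> \<le> ?G \<omega>" for \<omega>
    using norm_first_order_terms_le[OF assms(1) B, of "Y \<omega>"] \<open>0 \<le> c\<close>
    by (simp add: mult_left_mono)
  have int: "integrable M ?G" using assms(6) by simp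
  show "integrable M ?R"
  proof (rule Bochner_Integration.integrable_bound[OF int R_measurable], rule AE_I2)
    show "norm (?R \<omega>) \<le> norm (?G \<omega>)" for \<omega>
      using bound[of \<omega>] abs_ge_self[of "?G \<omega>"] by (simp only: real_norm_def abs_norm_cancel)
  qed
  then have "(\<integral>\<omega>. ?R \<omega> \<partial>M) \<le> (\<integral>\<omega>. ?G \<omega> \<partial>M)"
    using int bound by (intro integral_mono) auto
  also have "\<dots> = c * B * (1 + DIM((real^'n) \<times> real) * (\<integral>\<omega>. norm (Y \<omega>) \<partial>M))"
    using assms(6) by (simp add: prob_space algebra_simps)
  also have "\<dots> \<le> c * B * (1 + DIM((real^'n) \<times> real) * m)"
    using assms(2,3,7) by (intro mult_left_mono add_left_mono) auto
  finally show "(\<integral>\<omega>. ?R \<omega> \<partial>M) \<le> c * B * (1 + DIM((real^'n) \<times> real) * m)" .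
qed

section \<open>Solutions of the Langevin system\<close>

locale langevin_solution =
  fixes M :: "'a measure" and \<epsilon> :: real and b :: "(real^'n) \<times> real \<Rightarrow> real^'n"
    and W X V :: "real \<Rightarrow> 'a \<Rightarrow> real^'n"
  assumes eps_pos: "0 < \<epsilon>"
    and brownian: "std_brownian_motion M W"
    and X_measurable: "\<And>t. 0 \<le> t \<Longrightarrow> X t \<in> borel_measurable M"
    and V_measurable: "\<And>t. 0 \<le> t \<Longrightarrow> V t \<in> borel_measurable M"
    and X_continuous: "\<And>\<omega>. \<omega> \<in> space M \<Longrightarrow> continuous_on {0..} (\<lambda>t. X t \<omega>)"
    and V_continuous: "\<And>\<omega>. \<omega> \<in> space M \<Longrightarrow> continuous_on {0..} (\<lambda>t. V t \<omega>)"
    and velocity_equation: "\<And>\<omega> t. \<omega> \<in> space M \<Longrightarrow> 0 \<le> t \<Longrightarrow>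
      V t \<omega> = V 0 \<omega> + integral {0..t} (\<lambda>s. (1 / \<epsilon>) *\<^sub>R (b (X s \<omega>, s) - V s \<omega>))
        + sqrt (2 / \<epsilon>) *\<^sub>R W t \<omega>"
begin

sublocale prob_space M
  using brownian unfolding std_brownian_motion_def by blast

lemma W_measurable [measurable]: "W t \<in> borel_measurable M"
  using brownian unfolding std_brownian_motion_def by blast

lemma W_zero: "\<omega> \<in> space M \<Longrightarrow> W 0 \<omega> = 0"
  using brownian unfolding std_brownian_motion_def by blast

lemma W_continuous: "\<omega> \<in> space M \<Longrightarrow> continuous_on {0..} (\<lambda>t. W t \<omega>)"
  using brownian unfolding std_brownian_motion_def by blast

definition weighted_increments :: "real \<Rightarrow> 'a \<Rightarrow> real" where
  "weighted_increments t \<omega> = integral {0..t} (\<lambda>s. exp (- (t - s) / \<epsilon>) * (norm (W t \<omega> - W s \<omega>))\<^sup>2)"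

lemma continuous_on_weighted_increment:
  "\<omega> \<in> space M \<Longrightarrow> continuous_on {0..t} (\<lambda>s. exp (- (t - s) / \<epsilon>) * (norm (W t \<omega> - W s \<omega>))\<^sup>2)"
  using W_continuous continuous_on_subset[of "{0..}" _ "{0..t}"] eps_pos
  by (intro continuous_intros) auto

lemma weighted_increments_nonneg: "\<omega> \<in> space M \<Longrightarrow> 0 \<le> weighted_increments t \<omega>"
  unfolding weighted_increments_def
  by (intro integral_nonneg integrable_continuous_interval continuous_on_weighted_increment) auto

lemma borel_measurable_weighted_increments:
  assumes "0 \<le> t"
  shows "weighted_increments t \<in> borel_measurable M"
  unfolding weighted_increments_def
  by (rule borel_measurable_integral_continuous_process[OF assms _ continuous_on_weighted_increment])
    measurable

lemma velocity_squared_norm_le: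
  assumes "continuous_on UNIV b" "\<And>z. 0 \<le> snd z \<Longrightarrow> norm (b z) \<le> B"
    and "\<omega> \<in> space M" "0 \<le> t"
  shows "(norm (V t \<omega>))\<^sup>2 \<le> 3 * (norm (V 0 \<omega>))\<^sup>2 + 3 * B\<^sup>2
    + 12 / \<epsilon> * ((exp (- t / \<epsilon>))\<^sup>2 * (norm (W t \<omega>))\<^sup>2 + (1 / \<epsilon>) * weighted_increments t \<omega>)"
proof -
  have sub: "{0..t} \<subseteq> {0..}" by auto
  have X: "continuous_on {0..t} (\<lambda>s. X s \<omega>)"
    using X_continuous[OF assms(3)] sub by (rule continuous_on_subset)
  have "(norm (V t \<omega>))\<^sup>2 \<le> 3 * (norm (V 0 \<omega>))\<^sup>2 + 3 * B\<^sup>2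
    + 6 * (sqrt (2 / \<epsilon>))\<^sup>2 * ((exp (- t / \<epsilon>))\<^sup>2 * (norm (W t \<omega>))\<^sup>2
      + (1 / \<epsilon>) * integral {0..t} (\<lambda>s. exp (- (t - s) / \<epsilon>) * (norm (W t \<omega> - W s \<omega>))\<^sup>2))"
  proof (rule noisy_relaxation_squared_norm_le[where g = "\<lambda>s. b (X s \<omega>, s)"])
    show "continuous_on {0..t} (\<lambda>s. V s \<omega>)"
      using V_continuous[OF assms(3)] sub by (rule continuous_on_subset)
    show "continuous_on {0..t} (\<lambda>s. W s \<omega>)"
      using W_continuous[OF assms(3)] sub by (rule continuous_on_subset)
    show "continuous_on {0..t} (\<lambda>s. b (X s \<omega>, s))"
      using X by (intro continuous_on_compose2[OF assms(1)] continuous_intros) auto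
  next
    fix u assume "u \<in> {0..t}"
    then show "V u \<omega> = V 0 \<omega> + integral {0..u} (\<lambda>s. (1 / \<epsilon>) *\<^sub>R (b (X s \<omega>, s) - V s \<omega>))
        + sqrt (2 / \<epsilon>) *\<^sub>R W u \<omega>"
      using assms(3) by (intro velocity_equation) auto
  qed (use assms eps_pos W_zero in auto)
  then show ?thesis using eps_pos by (simp add: weighted_increments_def)
qed

lemma expectation_weighted_increments_le:
  assumes "0 \<le> t"
  shows "(\<integral>\<^sup>+\<omega>. weighted_increments t \<omega> \<partial>M) \<le> ennreal (CARD('n) * \<epsilon>\<^sup>2)"
proof -
  let ?N = "real CARD('n)"
  have "(\<integral>\<^sup>+\<omega>. weighted_increments t \<omega> \<partial>M)
      \<le> ennreal (integral {0..t} (\<lambda>s. exp (- (t - s) / \<epsilon>) * (?N * (t - s))))"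
    unfolding weighted_increments_def
  proof (rule nn_integral_integral_continuous_process_le)
    show "sigma_finite_measure M" by (rule prob_space_imp_sigma_finite[OF prob_space_axioms])
    show "continuous_on {0..t} (\<lambda>s. exp (- (t - s) / \<epsilon>) * (norm (W t \<omega> - W s \<omega>))\<^sup>2)"
      if "\<omega> \<in> space M" for \<omega>
      using that by (rule continuous_on_weighted_increment)
    show "(\<integral>\<^sup>+\<omega>. exp (- (t - s) / \<epsilon>) * (norm (W t \<omega> - W s \<omega>))\<^sup>2 \<partial>M)
        \<le> ennreal (exp (- (t - s) / \<epsilon>) * (?N * (t - s)))" if "s \<in> {0..t}" for s
      using that by (simp add: ennreal_mult nn_integral_cmult
          std_brownian_motion_increment_second_moment[OF brownian])
  qed (use assms eps_pos in \<open>auto intro!: continuous_intros\<close>)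
  also have "\<dots> \<le> ennreal (?N * \<epsilon>\<^sup>2)"
  proof (rule ennreal_leI)
    have "integral {0..t} (\<lambda>s. exp (- (t - s) / \<epsilon>) * (?N * (t - s)))
        = ?N * integral {0..t} (\<lambda>s. exp (- (t - s) / \<epsilon>) * (t - s))"
      by (simp add: mult.left_commute)
    also have "\<dots> \<le> ?N * \<epsilon>\<^sup>2"
      by (intro mult_left_mono exp_kernel_lag_integral_le eps_pos assms) simp
    finally show "integral {0..t} (\<lambda>s. exp (- (t - s) / \<epsilon>) * (?N * (t - s))) \<le> ?N * \<epsilon>\<^sup>2" .
  qed
  finally show ?thesis .
qed

lemma expectation_noise_terms_le:
  assumes "0 \<le> t"
  shows "(\<integral>\<^sup>+\<omega>. (exp (- t / \<epsilon>))\<^sup>2 * (norm (W t \<omega>))\<^sup>2 + (1 / \<epsilon>) * weighted_increments t \<omega> \<partial>M)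
    \<le> ennreal (2 * real CARD('n) * \<epsilon>)"
proof -
  let ?N = "real CARD('n)"
  define a where "a = (exp (- t / \<epsilon>))\<^sup>2"
  define c where "c = 1 / \<epsilon>"
  have "0 \<le> a" "0 \<le> c" using eps_pos by (auto simp: a_def c_def)
  have "a * t \<le> \<epsilon>"
  proof -
    have "a * (t / \<epsilon>) \<le> exp (- (t / \<epsilon>)) * (t / \<epsilon>)"
      using eps_pos assms
      by (intro mult_right_mono) (auto simp: a_def power2_eq_square mult_left_le_one_le)
    also have "\<dots> \<le> 1" using mult_exp_minus_le_one[of "t / \<epsilon>"] by (simp add: mult.commute)
    finally show ?thesis using eps_pos by (simp add: field_simps)
  qed
  have "(\<integral>\<^sup>+\<omega>. a * (norm (W t \<omega>))\<^sup>2 + c * weighted_increments t \<omega> \<partial>M)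
      = ennreal a * (\<integral>\<^sup>+\<omega>. (norm (W t \<omega>))\<^sup>2 \<partial>M) + ennreal c * (\<integral>\<^sup>+\<omega>. weighted_increments t \<omega> \<partial>M)"
    using borel_measurable_weighted_increments[OF assms] weighted_increments_nonneg eps_pos
    by (intro nn_integral_scaled_add) (auto simp: a_def c_def)
  also have "\<dots> \<le> ennreal a * ennreal (?N * t) + ennreal c * ennreal (?N * \<epsilon>\<^sup>2)"
  proof -
    have "(\<integral>\<^sup>+\<omega>. (norm (W t \<omega>))\<^sup>2 \<partial>M) = ennreal (?N * t)"
      using std_brownian_motion_increment_second_moment[OF brownian order_refl assms]
      by (simp add: W_zero cong: nn_integral_cong)
    then show ?thesis
      using expectation_weighted_increments_le[OF assms] by (auto intro!: add_mono mult_left_mono)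
  qed
  also have "\<dots> = ennreal (a * (?N * t)) + ennreal (c * (?N * \<epsilon>\<^sup>2))"
    using \<open>0 \<le> a\<close> \<open>0 \<le> c\<close> assms by (simp add: ennreal_mult)
  also have "\<dots> \<le> ennreal (2 * ?N * \<epsilon>)"
  proof -
    have "a * (?N * t) + c * (?N * \<epsilon>\<^sup>2) = ?N * (a * t + \<epsilon>)"
      using eps_pos by (simp add: c_def power2_eq_square algebra_simps)
    also have "\<dots> \<le> 2 * ?N * \<epsilon>"
      using \<open>a * t \<le> \<epsilon>\<close> by (simp add: mult_left_mono)
    finally show ?thesis
      using eps_pos assms by (simp add: a_def c_def flip: ennreal_plus)
  qed
  finally show ?thesis by (simp add: a_def c_def)
qed

lemma velocity_second_moment:
  assumes "continuous_on UNIV b" "\<And>z. 0 \<le> snd z \<Longrightarrow> norm (b z) \<le> B" "0 \<le> t"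
  shows "(\<integral>\<^sup>+\<omega>. (norm (V t \<omega>))\<^sup>2 \<partial>M)
    \<le> 3 * (\<integral>\<^sup>+\<omega>. (norm (V 0 \<omega>))\<^sup>2 \<partial>M) + ennreal (3 * B\<^sup>2 + 24 * real CARD('n))"
proof -
  define noise where "noise \<omega> = (exp (- t / \<epsilon>))\<^sup>2 * (norm (W t \<omega>))\<^sup>2 + (1 / \<epsilon>) * weighted_increments t \<omega>"
    for \<omega>
  define c where "c = 12 / \<epsilon>"
  have "0 \<le> c" using eps_pos by (simp add: c_def)
  have noise_nonneg: "0 \<le> noise \<omega>" if "\<omega> \<in> space M" for \<omega>
    using weighted_increments_nonneg[OF that] eps_pos by (simp add: noise_def)
  have [measurable]: "noise \<in> borel_measurable M" "V 0 \<in> borel_measurable M"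
    using borel_measurable_weighted_increments[OF assms(3)] V_measurable[of 0]
    unfolding noise_def by measurable
  have "(\<integral>\<^sup>+\<omega>. (norm (V t \<omega>))\<^sup>2 \<partial>M) \<le> (\<integral>\<^sup>+\<omega>. 3 * B\<^sup>2 + (3 * (norm (V 0 \<omega>))\<^sup>2 + c * noise \<omega>) \<partial>M)"
    using velocity_squared_norm_le[OF assms(1,2) _ assms(3)]
    by (intro nn_integral_mono ennreal_leI) (simp add: noise_def c_def algebra_simps)
  also have "\<dots> = (\<integral>\<^sup>+\<omega>. ennreal (3 * B\<^sup>2) + ennreal (3 * (norm (V 0 \<omega>))\<^sup>2 + c * noise \<omega>) \<partial>M)"
    using noise_nonneg \<open>0 \<le> c\<close> by (intro nn_integral_cong) simp
  also have "\<dots> = ennreal (3 * B\<^sup>2) + (\<integral>\<^sup>+\<omega>. 3 * (norm (V 0 \<omega>))\<^sup>2 + c * noise \<omega> \<partial>M)"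
    by (simp add: nn_integral_add emeasure_space_1)
  also have "\<dots> = ennreal (3 * B\<^sup>2) + (3 * (\<integral>\<^sup>+\<omega>. (norm (V 0 \<omega>))\<^sup>2 \<partial>M) + ennreal c * (\<integral>\<^sup>+\<omega>. noise \<omega> \<partial>M))"
    using noise_nonneg \<open>0 \<le> c\<close> by (subst nn_integral_scaled_add) auto
  also have "\<dots> \<le> ennreal (3 * B\<^sup>2)
      + (3 * (\<integral>\<^sup>+\<omega>. (norm (V 0 \<omega>))\<^sup>2 \<partial>M) + ennreal c * ennreal (2 * real CARD('n) * \<epsilon>))"
    using expectation_noise_terms_le[OF assms(3)]
    by (auto simp: noise_def intro!: add_left_mono mult_left_mono)
  also have "\<dots> = 3 * (\<integral>\<^sup>+\<omega>. (norm (V 0 \<omega>))\<^sup>2 \<partial>M) + ennreal (3 * B\<^sup>2 + 24 * real CARD('n))"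
  proof -
    have "ennreal c * ennreal (2 * real CARD('n) * \<epsilon>) = ennreal (24 * real CARD('n))"
      using eps_pos by (simp add: c_def flip: ennreal_mult)
    then show ?thesis by (simp add: add_ac)
  qed
  finally show ?thesis .
qed

lemma velocity_second_moment_le_of_powr_moment:
  assumes "continuous_on UNIV b" "\<And>z. 0 \<le> snd z \<Longrightarrow> norm (b z) \<le> B" "norm c \<le> B"
    and "integrable M (\<lambda>\<omega>. norm (V 0 \<omega> - c) powr p)" "(\<integral>\<omega>. norm (V 0 \<omega> - c) powr p \<partial>M) \<le> Mp"
    and "2 \<le> p" "0 \<le> t"
  shows "(\<integral>\<^sup>+\<omega>. (norm (V t \<omega>))\<^sup>2 \<partial>M)
    \<le> ennreal (3 * (2 * (1 + Mp + B\<^sup>2)) + (3 * B\<^sup>2 + 24 * real CARD('n)))"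
proof -
  have "0 \<le> (\<integral>\<omega>. norm (V 0 \<omega> - c) powr p \<partial>M)" by (intro integral_nonneg_AE) simp
  then have "0 \<le> Mp" using assms(5) by linarith
  have "(\<integral>\<^sup>+\<omega>. (norm (V 0 \<omega>))\<^sup>2 \<partial>M) \<le> ennreal (2 * (1 + Mp + (norm c)\<^sup>2))"
    by (rule second_moment_le_of_powr_moment[OF V_measurable[OF order_refl] assms(4-6)])
  also have "\<dots> \<le> ennreal (2 * (1 + Mp + B\<^sup>2))"
    using assms(3) by (intro ennreal_leI) (simp add: power_mono)
  finally have initial: "(\<integral>\<^sup>+\<omega>. (norm (V 0 \<omega>))\<^sup>2 \<partial>M) \<le> ennreal (2 * (1 + Mp + B\<^sup>2))" .
  have "(\<integral>\<^sup>+\<omega>. (norm (V t \<omega>))\<^sup>2 \<partial>M)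
      \<le> 3 * (\<integral>\<^sup>+\<omega>. (norm (V 0 \<omega>))\<^sup>2 \<partial>M) + ennreal (3 * B\<^sup>2 + 24 * real CARD('n))"
    by (rule velocity_second_moment[OF assms(1,2,7)])
  also have "\<dots> \<le> 3 * ennreal (2 * (1 + Mp + B\<^sup>2)) + ennreal (3 * B\<^sup>2 + 24 * real CARD('n))"
    by (intro add_right_mono mult_left_mono initial) simp
  also have "\<dots> = ennreal (3 * (2 * (1 + Mp + B\<^sup>2)) + (3 * B\<^sup>2 + 24 * real CARD('n)))"
    using \<open>0 \<le> Mp\<close> by (subst ennreal_plus) (auto simp: ennreal_mult)
  finally show ?thesis .
qed

lemma continuous_on_state_path:
  fixes \<Phi> :: "(real^'n) \<times> real \<Rightarrow> real^'n \<Rightarrow> 'b::topological_space"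
  assumes "continuous_on UNIV (\<lambda>(z, v). \<Phi> z v)" "\<omega> \<in> space M"
  shows "continuous_on {0..t} (\<lambda>s. \<Phi> (X s \<omega>, s) (V s \<omega>))"
proof -
  have "continuous_on {0..t} (\<lambda>s. X s \<omega>)" "continuous_on {0..t} (\<lambda>s. V s \<omega>)"
    using X_continuous[OF assms(2)] V_continuous[OF assms(2)]
    by (auto intro: continuous_on_subset)
  then have "continuous_on {0..t} (\<lambda>s. ((X s \<omega>, s), V s \<omega>))"
    by (intro continuous_intros)
  from continuous_on_compose2[OF assms(1) this] show ?thesis by simp
qed

lemma borel_measurable_state:
  fixes \<Phi> :: "(real^'n) \<times> real \<Rightarrow> real^'n \<Rightarrow> 'b::topological_space"
  assumes "continuous_on UNIV (\<lambda>(z, v). \<Phi> z v)" "0 \<le> s"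
  shows "(\<lambda>\<omega>. \<Phi> (X s \<omega>, s) (V s \<omega>)) \<in> borel_measurable M"
proof -
  have [measurable]: "X s \<in> borel_measurable M" "V s \<in> borel_measurable M"
    using assms(2) X_measurable V_measurable by auto
  have "(\<lambda>\<omega>. ((X s \<omega>, s), V s \<omega>)) \<in> borel_measurable M" by measurable
  from measurable_compose[OF this borel_measurable_continuous_onI[OF assms(1)]] show ?thesis
    by simp
qed

definition damped_kinetic :: "real \<Rightarrow> 'a \<Rightarrow> real" where
  "damped_kinetic t \<omega> = integral {0..t} (\<lambda>s. exp (- (t - s) / \<epsilon>) * (1 + (norm (V s \<omega>))\<^sup>2))"

lemma continuous_on_damped_kinetic_integrand:
  "\<omega> \<in> space M \<Longrightarrow> continuous_on {0..t} (\<lambda>s. exp (- (t - s) / \<epsilon>) * (1 + (norm (V s \<omega>))\<^sup>2))"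
  using V_continuous continuous_on_subset[of "{0..}" _ "{0..t}"] eps_pos
  by (intro continuous_intros) auto

lemma damped_kinetic_nonneg: "\<omega> \<in> space M \<Longrightarrow> 0 \<le> damped_kinetic t \<omega>"
  unfolding damped_kinetic_def
  by (intro integral_nonneg integrable_continuous_interval continuous_on_damped_kinetic_integrand) auto

lemma borel_measurable_damped_kinetic_integrand:
  assumes "0 \<le> s"
  shows "(\<lambda>\<omega>. exp (- (t - s) / \<epsilon>) * (1 + (norm (V s \<omega>))\<^sup>2)) \<in> borel_measurable M"
proof -
  have [measurable]: "V s \<in> borel_measurable M" using assms V_measurable by auto
  show ?thesis by measurable
qed

lemma borel_measurable_damped_kinetic:
  assumes "0 \<le> t"
  shows "damped_kinetic t \<in> borel_measurable M"
  unfolding damped_kinetic_def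
  by (rule borel_measurable_integral_continuous_process[OF assms
        borel_measurable_damped_kinetic_integrand continuous_on_damped_kinetic_integrand]) auto

lemma expectation_damped_kinetic_le:
  assumes moment: "\<And>s. 0 \<le> s \<Longrightarrow> (\<integral>\<^sup>+\<omega>. (norm (V s \<omega>))\<^sup>2 \<partial>M) \<le> ennreal K"
    and "0 \<le> K" "0 \<le> t"
  shows "(\<integral>\<^sup>+\<omega>. damped_kinetic t \<omega> \<partial>M) \<le> ennreal (\<epsilon> * (1 + K))"
proof -
  have "(\<integral>\<^sup>+\<omega>. damped_kinetic t \<omega> \<partial>M)
      \<le> ennreal (integral {0..t} (\<lambda>s. exp (- (t - s) / \<epsilon>) * (1 + K)))"
    unfolding damped_kinetic_def
  proof (rule nn_integral_integral_continuous_process_le)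
    show "sigma_finite_measure M" by (rule prob_space_imp_sigma_finite[OF prob_space_axioms])
    show "(\<integral>\<^sup>+\<omega>. exp (- (t - s) / \<epsilon>) * (1 + (norm (V s \<omega>))\<^sup>2) \<partial>M)
        \<le> ennreal (exp (- (t - s) / \<epsilon>) * (1 + K))" if "s \<in> {0..t}" for s
    proof -
      have [measurable]: "V s \<in> borel_measurable M" using that V_measurable by auto
      have "(\<integral>\<^sup>+\<omega>. exp (- (t - s) / \<epsilon>) * (1 + (norm (V s \<omega>))\<^sup>2) \<partial>M)
          = ennreal (exp (- (t - s) / \<epsilon>)) * (1 + (\<integral>\<^sup>+\<omega>. (norm (V s \<omega>))\<^sup>2 \<partial>M))"
        by (simp add: ennreal_mult nn_integral_cmult nn_integral_add emeasure_space_1)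
      also have "\<dots> \<le> ennreal (exp (- (t - s) / \<epsilon>)) * (1 + ennreal K)"
        using moment that by (intro mult_left_mono add_left_mono) auto
      finally show ?thesis using \<open>0 \<le> K\<close> by (simp add: ennreal_mult)
    qed
  qed (use assms eps_pos borel_measurable_damped_kinetic_integrand continuous_on_damped_kinetic_integrand
      in \<open>auto intro!: continuous_intros\<close>)
  also have "\<dots> \<le> ennreal (\<epsilon> * (1 + K))"
    using exp_kernel_integral_le[OF eps_pos assms(3)] \<open>0 \<le> K\<close>
    by (intro ennreal_leI) (simp add: mult_right_mono)
  finally show ?thesis .
qed

lemma damped_integral_expectation_le:
  fixes \<Phi> :: "(real^'n) \<times> real \<Rightarrow> real^'n \<Rightarrow> 'b::euclidean_space"
  assumes cont: "continuous_on UNIV (\<lambda>(z, v). \<Phi> z v)"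
    and bound: "\<And>z v. 0 \<le> snd z \<Longrightarrow> norm (\<Phi> z v) \<le> K * (1 + (norm v)\<^sup>2)"
    and moment: "\<And>s. 0 \<le> s \<Longrightarrow> (\<integral>\<^sup>+\<omega>. (norm (V s \<omega>))\<^sup>2 \<partial>M) \<le> ennreal K2"
    and "0 \<le> K" "0 \<le> K2" "0 \<le> t"
  shows "integrable M (\<lambda>\<omega>. norm (\<epsilon> *\<^sub>R integral {0..t} (\<lambda>s. exp (- (t - s) / \<epsilon>) *\<^sub>R \<Phi> (X s \<omega>, s) (V s \<omega>))))
    \<and> (\<integral>\<omega>. norm (\<epsilon> *\<^sub>R integral {0..t} (\<lambda>s. exp (- (t - s) / \<epsilon>) *\<^sub>R \<Phi> (X s \<omega>, s) (V s \<omega>))) \<partial>M)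
      \<le> K * (1 + K2) * \<epsilon>\<^sup>2"
proof (rule nn_integral_le_imp_integrable_integral_le)
  let ?U = "\<lambda>\<omega>. \<epsilon> *\<^sub>R integral {0..t} (\<lambda>s. exp (- (t - s) / \<epsilon>) *\<^sub>R \<Phi> (X s \<omega>, s) (V s \<omega>))"
  have path: "continuous_on {0..t} (\<lambda>s. exp (- (t - s) / \<epsilon>) *\<^sub>R \<Phi> (X s \<omega>, s) (V s \<omega>))"
    if "\<omega> \<in> space M" for \<omega>
    using eps_pos by (intro continuous_intros continuous_on_state_path[OF cont that]) auto
  have "(\<lambda>\<omega>. integral {0..t} (\<lambda>s. exp (- (t - s) / \<epsilon>) *\<^sub>R \<Phi> (X s \<omega>, s) (V s \<omega>))) \<in> borel_measurable M"
  proof (rule borel_measurable_integral_continuous_process)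
    fix s :: real assume "s \<in> {0..t}"
    then have [measurable]: "(\<lambda>\<omega>. \<Phi> (X s \<omega>, s) (V s \<omega>)) \<in> borel_measurable M"
      by (intro borel_measurable_state[OF cont]) auto
    show "(\<lambda>\<omega>. exp (- (t - s) / \<epsilon>) *\<^sub>R \<Phi> (X s \<omega>, s) (V s \<omega>)) \<in> borel_measurable M"
      by measurable
  qed (use path \<open>0 \<le> t\<close> in auto)
  then show "(\<lambda>\<omega>. norm (?U \<omega>)) \<in> borel_measurable M" by measurable
  have "norm (?U \<omega>) \<le> \<epsilon> * K * damped_kinetic t \<omega>" if "\<omega> \<in> space M" for \<omega>
  proof -
    have "norm (integral {0..t} (\<lambda>s. exp (- (t - s) / \<epsilon>) *\<^sub>R \<Phi> (X s \<omega>, s) (V s \<omega>)))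
        \<le> integral {0..t} (\<lambda>s. K * (exp (- (t - s) / \<epsilon>) * (1 + (norm (V s \<omega>))\<^sup>2)))"
    proof (rule integral_norm_bound_integral)
      show "(\<lambda>s. exp (- (t - s) / \<epsilon>) *\<^sub>R \<Phi> (X s \<omega>, s) (V s \<omega>)) integrable_on {0..t}"
        using path[OF that] by (rule integrable_continuous_interval)
      show "(\<lambda>s. K * (exp (- (t - s) / \<epsilon>) * (1 + (norm (V s \<omega>))\<^sup>2))) integrable_on {0..t}"
        using V_continuous[OF that] eps_pos
        by (intro integrable_continuous_interval) (auto intro!: continuous_intros intro: continuous_on_subset)
      show "norm (exp (- (t - s) / \<epsilon>) *\<^sub>R \<Phi> (X s \<omega>, s) (V s \<omega>))
          \<le> K * (exp (- (t - s) / \<epsilon>) * (1 + (norm (V s \<omega>))\<^sup>2))" if "s \<in> {0..t}" for s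
        using that bound[of "(X s \<omega>, s)" "V s \<omega>"] by (simp add: mult_left_mono mult.left_commute)
    qed
    then show ?thesis using eps_pos by (simp add: damped_kinetic_def mult.assoc mult_left_mono)
  qed
  then have "(\<integral>\<^sup>+\<omega>. norm (?U \<omega>) \<partial>M) \<le> (\<integral>\<^sup>+\<omega>. ennreal (\<epsilon> * K) * damped_kinetic t \<omega> \<partial>M)"
    using eps_pos \<open>0 \<le> K\<close> damped_kinetic_nonneg
    by (intro nn_integral_mono) (simp add: ennreal_mult[symmetric] ennreal_leI)
  also have "\<dots> = ennreal (\<epsilon> * K) * (\<integral>\<^sup>+\<omega>. damped_kinetic t \<omega> \<partial>M)"
    using borel_measurable_damped_kinetic[OF \<open>0 \<le> t\<close>] by (intro nn_integral_cmult) measurable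
  also have "\<dots> \<le> ennreal (\<epsilon> * K) * ennreal (\<epsilon> * (1 + K2))"
    using expectation_damped_kinetic_le[OF moment \<open>0 \<le> K2\<close> \<open>0 \<le> t\<close>] by (rule mult_left_mono) auto
  also have "\<dots> = ennreal (K * (1 + K2) * \<epsilon>\<^sup>2)"
    using eps_pos \<open>0 \<le> K\<close> \<open>0 \<le> K2\<close> by (simp add: power2_eq_square mult_ac flip: ennreal_mult)
  finally show "(\<integral>\<^sup>+\<omega>. norm (?U \<omega>) \<partial>M) \<le> ennreal (K * (1 + K2) * \<epsilon>\<^sup>2)" .
qed (use \<open>0 \<le> K\<close> \<open>0 \<le> K2\<close> in auto)

lemma initial_remainder_bound:
  fixes B Mp p :: real
  assumes b: "smooth_bounded_derivs b" "0 \<le> B"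
    and B: "\<And>us z. set us \<subseteq> Basis \<Longrightarrow> length us \<le> 2 \<Longrightarrow> 0 \<le> snd z \<Longrightarrow> norm (iter_dd us b z) \<le> B"
    and V0: "integrable M (\<lambda>\<omega>. norm (V 0 \<omega> - b (x, 0)) powr p)"
      "(\<integral>\<omega>. norm (V 0 \<omega> - b (x, 0)) powr p \<partial>M) \<le> Mp" "1 \<le> p"
  shows "integrable M (\<lambda>\<omega>. norm ((\<epsilon> * exp (- t / \<epsilon>)) *\<^sub>R
        (iter_dd [(0, 1)] b (x, 0) + iter_dd [(V 0 \<omega>, 0)] b (x, 0))))
      \<and> (\<integral>\<omega>. norm ((\<epsilon> * exp (- t / \<epsilon>)) *\<^sub>R
        (iter_dd [(0, 1)] b (x, 0) + iter_dd [(V 0 \<omega>, 0)] b (x, 0))) \<partial>M)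
        \<le> B * (1 + DIM((real^'n) \<times> real) * (1 + Mp + B)) * \<epsilon> * exp (- t / \<epsilon>)"
proof -
  have "norm (b (x, 0)) \<le> B" using B[of "[]"] by auto
  then have V0_first: "integrable M (\<lambda>\<omega>. norm (V 0 \<omega>))" "(\<integral>\<omega>. norm (V 0 \<omega>) \<partial>M) \<le> 1 + Mp + B"
    using first_moment_le_of_powr_moment[OF V_measurable[OF order_refl] V0] by auto
  have Bx: "norm (iter_dd us b (x, 0)) \<le> B" if "set us \<subseteq> Basis" "length us \<le> 1" for us
    using that by (intro B) auto
  have "0 \<le> \<epsilon> * exp (- t / \<epsilon>)" using eps_pos by simp
  from initial_remainder_expectation_le[OF b this Bx V_measurable[OF order_refl] V0_first]
  show ?thesis by (simp only: mult_ac)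
qed

lemma transport_remainder_bound:
  fixes B Mp p :: real
  assumes b: "smooth_bounded_derivs b" "0 \<le> B"
    and B: "\<And>us z. set us \<subseteq> Basis \<Longrightarrow> length us \<le> 2 \<Longrightarrow> 0 \<le> snd z \<Longrightarrow> norm (iter_dd us b z) \<le> B"
    and V0: "integrable M (\<lambda>\<omega>. norm (V 0 \<omega> - b (x, 0)) powr p)"
      "(\<integral>\<omega>. norm (V 0 \<omega> - b (x, 0)) powr p \<partial>M) \<le> Mp" "2 \<le> p"
    and "0 \<le> t"
  shows "integrable M (\<lambda>\<omega>. norm (\<epsilon> *\<^sub>R integral {0..t}
        (\<lambda>s. exp (- (t - s) / \<epsilon>) *\<^sub>R transport_second_derivative b (X s \<omega>, s) (V s \<omega>))))
      \<and> (\<integral>\<omega>. norm (\<epsilon> *\<^sub>R integral {0..t}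
        (\<lambda>s. exp (- (t - s) / \<epsilon>) *\<^sub>R transport_second_derivative b (X s \<omega>, s) (V s \<omega>))) \<partial>M)
        \<le> B * (1 + real DIM((real^'n) \<times> real))\<^sup>2
          * (1 + (3 * (2 * (1 + Mp + B\<^sup>2)) + (3 * B\<^sup>2 + 24 * real CARD('n)))) * \<epsilon>\<^sup>2"
proof (rule damped_integral_expectation_le[OF continuous_transport_second_derivative[OF b(1)]])
  show "norm (transport_second_derivative b z v) \<le> B * (1 + real DIM((real^'n) \<times> real))\<^sup>2 * (1 + (norm v)\<^sup>2)"
    if "0 \<le> snd z" for z v
    using that by (intro norm_transport_second_derivative_le[OF b] B) auto
  have "continuous_on UNIV b"
    using iter_dd_continuous_on_compose[OF b(1), of "[]" UNIV "\<lambda>z. z"] by simp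
  moreover have "\<And>z. 0 \<le> snd z \<Longrightarrow> norm (b z) \<le> B" "norm (b (x, 0)) \<le> B"
    using B[of "[]"] by auto
  ultimately show "(\<integral>\<^sup>+\<omega>. (norm (V s \<omega>))\<^sup>2 \<partial>M)
      \<le> ennreal (3 * (2 * (1 + Mp + B\<^sup>2)) + (3 * B\<^sup>2 + 24 * real CARD('n)))" if "0 \<le> s" for s
    by (rule velocity_second_moment_le_of_powr_moment[OF _ _ _ V0 that])
  have "0 \<le> (\<integral>\<omega>. norm (V 0 \<omega> - b (x, 0)) powr p \<partial>M)" by (intro integral_nonneg_AE) simp
  with V0(2) have "0 \<le> Mp" by linarith
  then show "0 \<le> 3 * (2 * (1 + Mp + B\<^sup>2)) + (3 * B\<^sup>2 + 24 * real CARD('n))"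
    by simp
qed (use b(2) \<open>0 \<le> t\<close> in auto)

end

theorem lemma5p2:
  fixes b :: "(real^'n) \<times> real \<Rightarrow> real^'n" and p Mp :: real
  assumes "smooth_bounded_derivs b"
    and "periodic_in_x b"
    and "p \<ge> 4"
  shows "\<exists>C>0. \<forall>(M :: 'a measure) (\<epsilon>::real) (x::real^'n) (W :: real \<Rightarrow> 'a \<Rightarrow> real^'n) (X :: real \<Rightarrow> 'a \<Rightarrow> real^'n) (V :: real \<Rightarrow> 'a \<Rightarrow> real^'n).
    \<epsilon> > 0 \<and>
    std_brownian_motion M W \<and>
    V 0 \<in> borel_measurable M \<and>
    prob_space.indep_set M (sets (vimage_algebra (space M) (V 0) borel))
      (sets (vimage_algebra (space M) (\<lambda>\<omega> t. W t \<omega>) (Pi\<^sub>M UNIV (\<lambda>_::real. borel)))) \<and>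
    integrable M (\<lambda>\<omega>. V 0 \<omega> - b (x, 0)) \<and>
    integral\<^sup>L M (\<lambda>\<omega>. V 0 \<omega> - b (x, 0)) = 0 \<and>
    integrable M (\<lambda>\<omega>. norm (V 0 \<omega> - b (x, 0)) powr p) \<and>
    integral\<^sup>L M (\<lambda>\<omega>. norm (V 0 \<omega> - b (x, 0)) powr p) \<le> Mp \<and>
    (\<forall>t\<ge>0. X t \<in> borel_measurable M \<and> V t \<in> borel_measurable M) \<and>
    (\<forall>\<omega>\<in>space M. continuous_on {0..} (\<lambda>t. X t \<omega>) \<and> continuous_on {0..} (\<lambda>t. V t \<omega>) \<and>
       (\<forall>t\<ge>0.
          X t \<omega> = x + integral {0..t} (\<lambda>s. V s \<omega>) \<and>
          V t \<omega> = V 0 \<omega> + integral {0..t} (\<lambda>s. (1 / \<epsilon>) *\<^sub>R (b (X s \<omega>, s) - V s \<omega>))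
                    + sqrt (2 / \<epsilon>) *\<^sub>R W t \<omega>))
    \<longrightarrow>
    (\<forall>t\<ge>0.
      (let Rhat = (\<lambda>\<omega>. (\<epsilon> * exp (- t / \<epsilon>)) *\<^sub>R
                  (iter_dd [(0, 1)] b (x, 0) + iter_dd [(V 0 \<omega>, 0)] b (x, 0)));
           U = (\<lambda>\<omega>. \<epsilon> *\<^sub>R integral {0..t} (\<lambda>s. exp (- (t - s) / \<epsilon>) *\<^sub>R
                  (iter_dd [(0, 1), (0, 1)] b (X s \<omega>, s)
                   + 2 *\<^sub>R iter_dd [(0, 1), (V s \<omega>, 0)] b (X s \<omega>, s)
                   + iter_dd [(V s \<omega>, 0), (V s \<omega>, 0)] b (X s \<omega>, s))))
       in integrable M (\<lambda>\<omega>. norm (Rhat \<omega>)) \<and>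
          integral\<^sup>L M (\<lambda>\<omega>. norm (Rhat \<omega>)) \<le> C * \<epsilon> * exp (- t / \<epsilon>) \<and>
          integrable M (\<lambda>\<omega>. norm (U \<omega>)) \<and>
          integral\<^sup>L M (\<lambda>\<omega>. norm (U \<omega>)) \<le> C * \<epsilon>\<^sup>2))"
proof -
  obtain B where "0 \<le> B"
    and B: "\<And>us z. set us \<subseteq> Basis \<Longrightarrow> length us \<le> 2 \<Longrightarrow> 0 \<le> snd z \<Longrightarrow> norm (iter_dd us b z) \<le> B"
    using iter_dd_bounded_upto_two[OF assms(1)] by blast
  define D where "D = real DIM((real^'n) \<times> real)"
  define CR where "CR = B * (1 + D * (1 + max 0 Mp + B))"
  define CU where "CU = B * (1 + D)\<^sup>2 * (1 + (3 * (2 * (1 + max 0 Mp + B\<^sup>2)) + (3 * B\<^sup>2 + 24 * real CARD('n))))"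
  have "0 \<le> CR" "0 \<le> CU" using \<open>0 \<le> B\<close> by (simp_all add: CR_def CU_def D_def)
  show ?thesis
  proof (intro exI[of _ "CR + CU + 1"] conjI allI impI, goal_cases)
    case 1
    then show ?case using \<open>0 \<le> CR\<close> \<open>0 \<le> CU\<close> by simp
  next
    case (2 M \<epsilon> x W X V t)
    interpret langevin_solution M \<epsilon> b W X V
      by unfold_locales (use 2(1) in blast)+
    have V0: "integrable M (\<lambda>\<omega>. norm (V 0 \<omega> - b (x, 0)) powr p)"
      "(\<integral>\<omega>. norm (V 0 \<omega> - b (x, 0)) powr p \<partial>M) \<le> max 0 Mp"
      using 2(1) by auto
    have "1 \<le> p" "2 \<le> p" using assms(3) by simp_all
    note R = initial_remainder_bound[where B = B, OF assms(1) \<open>0 \<le> B\<close> B V0 \<open>1 \<le> p\<close>]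
    note U = transport_remainder_bound[where B = B, OF assms(1) \<open>0 \<le> B\<close> B V0 \<open>2 \<le> p\<close> 2(2)]
    have "CR * \<epsilon> * exp (- t / \<epsilon>) \<le> (CR + CU + 1) * \<epsilon> * exp (- t / \<epsilon>)"
      "CU * \<epsilon>\<^sup>2 \<le> (CR + CU + 1) * \<epsilon>\<^sup>2"
      using \<open>0 \<le> CR\<close> \<open>0 \<le> CU\<close> eps_pos by (simp_all add: mult_right_mono)
    with R U[unfolded transport_second_derivative_def] show ?case
      unfolding Let_def CR_def CU_def D_def by (meson order.trans)
  qed
qed

end
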